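(* Consider the smooth system $\mathbf{X}'=\Phi_2(\mathbf{X})$ on $\mathbb{R}^3_+$. (i) If $\mathcal{N}_M<1$, then $\mathbf{E}_0=(0,0,0)$ is locally asymptotically stable. (ii) If $\mathcal{N}_M>1$ and $\theta_M>1$ (equivalently $\frac{(1-r)\rho}{\delta}>\mathcal{N}_M>1$), then the positive equilibrium $\mathbf{E}_2^*$ is locally asymptotically stable and $\mathbf{E}_0$ is unstable; however, $\mathbf{E}_0$ is not a repeller: there exists a trajectory (other than the equilibrium itself) converging to $\mathbf{E}_0$.
   Context: Parameters: $r\in(0,1)$, $\rho,\sigma,\mu,\delta,\nu,\eta>0$, $\gamma\ge1$, $\mu\ge\delta$. $\Phi_2(M,A,U)=\big(r\rho Ue^{-\sigma(M+A+U)}-\mu M,\ (1-r)\rho Ue^{-\sigma(M+A+U)}-\nu\gamma M+\eta U-\delta A,\ \nu\gamma M-\eta U-\delta U\big)$. $\mathcal{N}_M:=\frac{\gamma r\rho\nu}{\mu(\delta+\eta)}$, $\theta_M:=\frac{(1-r)\mu(\delta+\eta)}{\gamma r\delta\nu}$, and $\mathbf{E}_2^*=(M_2^*,A_2^*,U_2^* )$ with $M_2^*=\frac{\delta+\eta}{\gamma\nu\theta_M+\eta+\delta}\frac1\sigma\ln\mathcal{N}_M$, $A_2^*=\frac{\gamma\nu(\theta_M-1)}{\gamma\nu\theta_M+\eta+\delta}\frac1\sigma\ln\mathcal{N}_M$, $U_2^*=\frac{\gamma\nu}{\gamma\nu\theta_M+\eta+\delta}\frac1\sigma\ln\mathcal{N}_M$.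 *)

theory Defs
  imports "HOL-Analysis.Analysis"
begin

definition Phi2 :: "real \<Rightarrow> real \<Rightarrow> real \<Rightarrow> real \<Rightarrow> real \<Rightarrow> real \<Rightarrow> real \<Rightarrow> real
    \<Rightarrow> real \<times> real \<times> real \<Rightarrow> real \<times> real \<times> real" where
  "Phi2 r \<rho> \<sigma> \<mu> \<delta> \<nu> \<eta> \<gamma> X = (case X of (M, A, U) \<Rightarrow>
     (r * \<rho> * U * exp (- \<sigma> * (M + A + U)) - \<mu> * M,
      (1 - r) * \<rho> * U * exp (- \<sigma> * (M + A + U)) - \<nu> * \<gamma> * M + \<eta> * U - \<delta> * A,
      \<nu> * \<gamma> * M - \<eta> * U - \<delta> * U))"

definition N_M :: "real \<Rightarrow> real \<Rightarrow> real \<Rightarrow> real \<Rightarrow> real \<Rightarrow> real \<Rightarrow> real \<Rightarrow> real" where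
  "N_M r \<rho> \<mu> \<delta> \<nu> \<eta> \<gamma> = (\<gamma> * r * \<rho> * \<nu>) / (\<mu> * (\<delta> + \<eta>))"

definition theta_M :: "real \<Rightarrow> real \<Rightarrow> real \<Rightarrow> real \<Rightarrow> real \<Rightarrow> real \<Rightarrow> real" where
  "theta_M r \<mu> \<delta> \<nu> \<eta> \<gamma> = ((1 - r) * \<mu> * (\<delta> + \<eta>)) / (\<gamma> * r * \<delta> * \<nu>)"

definition E2 :: "real \<Rightarrow> real \<Rightarrow> real \<Rightarrow> real \<Rightarrow> real \<Rightarrow> real \<Rightarrow> real \<Rightarrow> real
    \<Rightarrow> real \<times> real \<times> real" where
  "E2 r \<rho> \<sigma> \<mu> \<delta> \<nu> \<eta> \<gamma> =
     (let N = N_M r \<rho> \<mu> \<delta> \<nu> \<eta> \<gamma>; th = theta_M r \<mu> \<delta> \<nu> \<eta> \<gamma>;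
          D = \<gamma> * \<nu> * th + \<eta> + \<delta>; L = ln N / \<sigma>
      in ((\<delta> + \<eta>) / D * L, \<gamma> * \<nu> * (th - 1) / D * L, \<gamma> * \<nu> / D * L))"

definition orthant :: "(real \<times> real \<times> real) set" where
  "orthant = {(M, A, U). M \<ge> 0 \<and> A \<ge> 0 \<and> U \<ge> 0}"

definition is_sol :: "('a::real_normed_vector \<Rightarrow> 'a) \<Rightarrow> (real \<Rightarrow> 'a) \<Rightarrow> real set \<Rightarrow> bool" where
  "is_sol F x I \<longleftrightarrow> is_interval I \<and> 0 \<in> I \<and> I \<subseteq> {0..} \<and>
     (\<forall>t\<in>I. (x has_vector_derivative F (x t)) (at t within I))"

definition equilibrium :: "('a::real_normed_vector \<Rightarrow> 'a) \<Rightarrow> 'a \<Rightarrow> bool" where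
  "equilibrium F e \<longleftrightarrow> F e = 0"

definition stable_in :: "'a set \<Rightarrow> ('a::real_normed_vector \<Rightarrow> 'a) \<Rightarrow> 'a \<Rightarrow> bool" where
  "stable_in S F e \<longleftrightarrow> (\<forall>\<epsilon>>0. \<exists>d>0. \<forall>x I. is_sol F x I \<and> x 0 \<in> S \<and> dist (x 0) e < d
       \<longrightarrow> (\<forall>t\<in>I. dist (x t) e < \<epsilon>))"

definition attractive_in :: "'a set \<Rightarrow> ('a::real_normed_vector \<Rightarrow> 'a) \<Rightarrow> 'a \<Rightarrow> bool" where
  "attractive_in S F e \<longleftrightarrow> (\<exists>d>0. \<forall>y\<in>S. dist y e < d \<longrightarrow>
       (\<exists>x. is_sol F x {0..} \<and> x 0 = y) \<and>
       (\<forall>x. is_sol F x {0..} \<and> x 0 = y \<longrightarrow> (x \<longlongrightarrow> e) at_top))"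

definition loc_asym_stable_in :: "'a set \<Rightarrow> ('a::real_normed_vector \<Rightarrow> 'a) \<Rightarrow> 'a \<Rightarrow> bool" where
  "loc_asym_stable_in S F e \<longleftrightarrow> equilibrium F e \<and> stable_in S F e \<and> attractive_in S F e"

end

theory Submission
  imports Defs
begin

text \<open>
  Every claim is read off the linearization \<open>J\<close> of \<open>\<Phi>\<^sub>2\<close> at the equilibrium. A symmetric
  bilinear form \<open>B\<close> with \<open>B h h > 0\<close> and \<open>B h (J h) < 0\<close> is a Lyapunov function for the
  nonlinear system near the equilibrium, because the remainder of the linearization is
  \<open>o(|h|)\<close>; if instead \<open>B h (J h) > 0\<close>, then \<open>B\<close> is a Chetaev function and grows
  exponentially along every solution starting where it is positive. Solutions exist by Picard
  iteration for a globally Lipschitz extension of \<open>\<Phi>\<^sub>2\<close>.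

  At \<open>E\<^sub>0\<close> the \<open>(M, U)\<close>-block of \<open>J\<close> decouples from \<open>A\<close> and has determinant
  \<open>\<mu>(\<delta> + \<eta>)(1 - \<N>\<^sub>M)\<close>. For \<open>\<N>\<^sub>M < 1\<close> a weighted sum of squares works; for \<open>\<N>\<^sub>M > 1\<close>
  the block is a saddle, and the form \<open>X\<^sup>2 - Y\<^sup>2 - \<kappa> A\<^sup>2\<close> in its left eigencoordinates is a
  Chetaev function that is positive at points of the orthant arbitrarily close to \<open>E\<^sub>0\<close>.
  At \<open>E\<^sub>2\<^sup>*\<close> the characteristic polynomial of \<open>J\<close> satisfies the Routh--Hurwitz conditions
  (using \<open>\<delta> \<le> \<mu>\<close>), and the classical Lyapunov form in companion coordinates of \<open>J + l\<close>,
  for small \<open>l > 0\<close>, is strictly decreasing. Finally the \<open>A\<close>-axis is invariant with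
  \<open>A' = -\<delta> A\<close>, which gives a nontrivial trajectory converging to \<open>E\<^sub>0\<close>.
\<close>

section \<open>Global solutions of Lipschitz systems\<close>

lemma integral_power_interval:
  assumes "(0::real) \<le> t"
  shows "integral {0..t} (\<lambda>s. s ^ n) = t ^ Suc n / Suc n"
proof -
  have "((\<lambda>s. s ^ n) has_integral (t ^ Suc n / Suc n - 0 ^ Suc n / Suc n)) {0..t}"
  proof (rule fundamental_theorem_of_calculus[OF assms])
    fix x :: real
    have "((\<lambda>s. s ^ Suc n / Suc n) has_real_derivative x ^ n) (at x)"
      by (intro derivative_eq_intros) auto
    then show "((\<lambda>s. s ^ Suc n / Suc n) has_vector_derivative x ^ n) (at x within {0..t})"
      by (simp add: has_real_derivative_iff_has_vector_derivative has_vector_derivative_at_within)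
  qed
  then show ?thesis by (simp add: integral_unique)
qed

fun picard_iterate :: "('a::banach \<Rightarrow> 'a) \<Rightarrow> 'a \<Rightarrow> nat \<Rightarrow> real \<Rightarrow> 'a" where
  "picard_iterate G y 0 = (\<lambda>t. y)"
| "picard_iterate G y (Suc n) = (\<lambda>t. y + integral {0..t} (\<lambda>s. G (picard_iterate G y n s)))"

lemma continuous_on_picard_iterate:
  assumes G: "continuous_on UNIV G"
  shows "continuous_on {0..T} (picard_iterate G y n)"
proof (induction n)
  case 0
  then show ?case by simp
next
  case (Suc n)
  have "continuous_on {0..T} (\<lambda>s. G (picard_iterate G y n s))"
    by (rule continuous_on_compose2[OF G Suc]) auto
  then have "continuous_on {0..T} (\<lambda>u. integral {0..u} (\<lambda>s. G (picard_iterate G y n s)))"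
    by (auto simp: continuous_on_eq_continuous_within
        intro!: has_vector_derivative_continuous integral_has_vector_derivative)
  then show ?case by (auto intro!: continuous_intros)
qed

lemma integrable_picard_iterate:
  assumes "continuous_on UNIV G"
  shows "(\<lambda>s. G (picard_iterate G y n s)) integrable_on {0..t}"
  by (intro integrable_continuous_interval continuous_on_compose2[OF assms]
      continuous_on_picard_iterate[OF assms]) auto

lemma picard_iterate_step_bound:
  fixes G :: "'a::banach \<Rightarrow> 'a"
  assumes lip: "L-lipschitz_on UNIV G" and t: "0 \<le> t"
  shows "norm (picard_iterate G y (Suc n) t - picard_iterate G y n t)
           \<le> norm (G y) * L ^ n * t ^ Suc n / fact (Suc n)"
  using t
proof (induction n arbitrary: t)
  case 0
  then show ?case by simp
next
  case (Suc n)
  let ?x = "picard_iterate G y"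
  have G: "continuous_on UNIV G" by (rule lipschitz_on_continuous_on[OF lip])
  have L: "0 \<le> L" by (rule lipschitz_on_nonneg[OF lip])
  have "norm (?x (Suc (Suc n)) t - ?x (Suc n) t)
      = norm (integral {0..t} (\<lambda>s. G (?x (Suc n) s) - G (?x n s)))"
    using integral_diff[OF integrable_picard_iterate[OF G, of y "Suc n" t]
        integrable_picard_iterate[OF G, of y n t]]
    by simp
  also have "\<dots> \<le> integral {0..t} (\<lambda>s. L * (norm (G y) * L ^ n * s ^ Suc n / fact (Suc n)))"
  proof (rule integral_norm_bound_integral)
    fix s assume s: "s \<in> {0..t}"
    have "norm (G (?x (Suc n) s) - G (?x n s)) \<le> L * norm (?x (Suc n) s - ?x n s)"
      by (rule lipschitz_on_normD[OF lip]) auto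
    also have "\<dots> \<le> L * (norm (G y) * L ^ n * s ^ Suc n / fact (Suc n))"
      using Suc.IH[of s] s L by (intro mult_left_mono) auto
    finally show "norm (G (?x (Suc n) s) - G (?x n s)) \<le> \<dots>" .
  next
    show "(\<lambda>s. G (?x (Suc n) s) - G (?x n s)) integrable_on {0..t}"
      by (intro integrable_diff integrable_picard_iterate[OF G])
  qed (auto intro!: integrable_continuous_interval continuous_intros)
  also have "\<dots> = norm (G y) * L ^ Suc n / fact (Suc n) * integral {0..t} (\<lambda>s. s ^ Suc n)"
    by (simp only: integral_mult_right[symmetric]) (simp add: field_simps)
  also have "\<dots> = norm (G y) * L ^ Suc n * t ^ Suc (Suc n) / fact (Suc (Suc n))"
    by (simp only: integral_power_interval[OF Suc.prems]) (simp add: field_simps)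
  finally show ?case .
qed

definition picard_limit :: "('a::banach \<Rightarrow> 'a) \<Rightarrow> 'a \<Rightarrow> real \<Rightarrow> 'a" where
  "picard_limit G y t = y + (\<Sum>k. picard_iterate G y (Suc k) t - picard_iterate G y k t)"

lemma uniform_limit_picard_iterate:
  fixes G :: "'a::banach \<Rightarrow> 'a"
  assumes lip: "L-lipschitz_on UNIV G" and T: "0 \<le> T"
  shows "uniform_limit {0..T} (picard_iterate G y) (picard_limit G y) sequentially"
proof -
  let ?x = "picard_iterate G y"
  have L: "0 \<le> L" by (rule lipschitz_on_nonneg[OF lip])
  have "uniform_limit {0..T} (\<lambda>n t. \<Sum>k<n. ?x (Suc k) t - ?x k t)
      (\<lambda>t. \<Sum>k. ?x (Suc k) t - ?x k t) sequentially"
  proof (rule Weierstrass_m_test)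
    fix n t assume t: "t \<in> {0..T}"
    have "norm (?x (Suc n) t - ?x n t) \<le> norm (G y) * L ^ n * t ^ Suc n / fact (Suc n)"
      using picard_iterate_step_bound[OF lip] t by simp
    also have "\<dots> \<le> norm (G y) * L ^ n * T ^ Suc n / fact n"
      using t L by (intro frac_le mult_left_mono power_mono fact_mono) auto
    also have "\<dots> = norm (G y) * T * ((L * T) ^ n /\<^sub>R fact n)"
      by (simp add: power_mult_distrib divide_inverse_commute)
    finally show "norm (?x (Suc n) t - ?x n t) \<le> \<dots>" .
  next
    show "summable (\<lambda>n. norm (G y) * T * ((L * T) ^ n /\<^sub>R fact n))"
      by (intro summable_mult summable_exp_generic)
  qed
  then have "uniform_limit {0..T} (\<lambda>n t. y + (\<Sum>k<n. ?x (Suc k) t - ?x k t))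
      (picard_limit G y) sequentially"
    unfolding picard_limit_def[abs_def] by (intro uniform_limit_intros)
  moreover have "(\<lambda>n t. y + (\<Sum>k<n. ?x (Suc k) t - ?x k t)) = ?x"
    using sum_lessThan_telescope[of "\<lambda>k. ?x k _"] by (simp add: fun_eq_iff)
  ultimately show ?thesis by simp
qed

lemma picard_limit_integral_equation:
  fixes G :: "'a::banach \<Rightarrow> 'a"
  assumes lip: "L-lipschitz_on UNIV G" and t: "0 \<le> t"
  shows "picard_limit G y t = y + integral {0..t} (\<lambda>s. G (picard_limit G y s))"
proof -
  let ?x = "picard_iterate G y" and ?\<psi> = "picard_limit G y"
  have G: "continuous_on UNIV G" by (rule lipschitz_on_continuous_on[OF lip])
  have ul: "uniform_limit {0..t} ?x ?\<psi> sequentially"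
    by (rule uniform_limit_picard_iterate[OF lip t])
  have "uniform_limit {0..t} (\<lambda>n s. G (?x n s)) (G \<circ> ?\<psi>) sequentially"
    by (rule uniform_limit_compose[OF ul lipschitz_on_uniformly_continuous[OF lip]]) auto
  then obtain I J where I: "\<And>n. ((\<lambda>s. G (?x n s)) has_integral I n) {0..t}"
    and J: "((G \<circ> ?\<psi>) has_integral J) {0..t}" and IJ: "I \<longlonglongrightarrow> J"
    by (rule uniform_limit_integral)
      (auto intro: continuous_on_compose2[OF G continuous_on_picard_iterate[OF G]])
  have "(\<lambda>n. ?x (Suc n) t) = (\<lambda>n. y + I n)"
    using integral_unique[OF I] by simp
  then have "(\<lambda>n. ?x (Suc n) t) \<longlonglongrightarrow> y + J"
    by (simp add: tendsto_add[OF tendsto_const IJ])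
  moreover have "(\<lambda>n. ?x (Suc n) t) \<longlonglongrightarrow> ?\<psi> t"
    using LIMSEQ_Suc[OF tendsto_uniform_limitI[OF ul, of t]] t by simp
  moreover have "J = integral {0..t} (\<lambda>s. G (?\<psi> s))"
    using integral_unique[OF J] by (simp add: comp_def)
  ultimately show ?thesis
    using LIMSEQ_unique by blast
qed

lemma lipschitz_global_solution:
  fixes G :: "'a::banach \<Rightarrow> 'a"
  assumes lip: "L-lipschitz_on UNIV G"
  obtains x where "x 0 = y" "\<And>t. 0 \<le> t \<Longrightarrow> (x has_vector_derivative G (x t)) (at t within {0..})"
proof
  let ?\<psi> = "picard_limit G y"
  have G: "continuous_on UNIV G" by (rule lipschitz_on_continuous_on[OF lip])
  show "?\<psi> 0 = y"
    using picard_limit_integral_equation[OF lip, of 0] by simp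
  fix t :: real assume t: "0 \<le> t"
  have "continuous_on {0..t+1} ?\<psi>"
    by (rule uniform_limit_theorem[OF _ uniform_limit_picard_iterate[OF lip]])
      (use t in \<open>auto intro: always_eventually continuous_on_picard_iterate[OF G]\<close>)
  then have "continuous_on {0..t+1} (\<lambda>s. G (?\<psi> s))"
    by (rule continuous_on_compose2[OF G]) auto
  then have "((\<lambda>u. y + integral {0..u} (\<lambda>s. G (?\<psi> s))) has_vector_derivative G (?\<psi> t))
      (at t within {0..t+1})"
    using t by (auto intro!: derivative_eq_intros integral_has_vector_derivative)
  then have "(?\<psi> has_vector_derivative G (?\<psi> t)) (at t within {0..t+1})"
    by (rule has_vector_derivative_transform[rotated 2])
      (use t picard_limit_integral_equation[OF lip] in auto)
  moreover have "at t within {0..t+1} = at t within {0..}"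
    by (rule at_within_nhd[where S="{..<t+1}"]) auto
  ultimately show "(?\<psi> has_vector_derivative G (?\<psi> t)) (at t within {0..})" by simp
qed

section \<open>Continuity arguments and comparison\<close>

lemma lipschitz_on_cball_extension:
  fixes F :: "'a::euclidean_space \<Rightarrow> 'b::real_normed_vector"
  assumes lip: "L-lipschitz_on (cball e R) F" and R: "0 \<le> R"
  obtains G where "L-lipschitz_on UNIV G" "\<And>x. x \<in> cball e R \<Longrightarrow> G x = F x"
proof
  let ?P = "closest_point (cball e R)"
  have "1-lipschitz_on UNIV ?P"
    using closest_point_lipschitz[of "cball e R"] R by (intro lipschitz_onI) auto
  moreover have "L-lipschitz_on (?P ` UNIV) F"
    by (rule lipschitz_on_subset[OF lip]) (use R in \<open>auto intro: closest_point_in_set\<close>)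
  ultimately show "L-lipschitz_on UNIV (\<lambda>x. F (?P x))"
    using lipschitz_on_compose2 by fastforce
  show "F (?P x) = F x" if "x \<in> cball e R" for x
    using that by (simp add: closest_point_self)
qed

lemma continuous_derivative_imp_lipschitz_on:
  fixes f :: "'a::euclidean_space \<Rightarrow> 'b::real_normed_vector"
  assumes K: "compact K" "convex K"
    and f': "\<And>x. x \<in> K \<Longrightarrow> (f has_derivative f' x) (at x within K)"
    and cont: "continuous_on (K \<times> UNIV) (\<lambda>z. f' (fst z) (snd z))"
  obtains L where "L-lipschitz_on K f"
proof -
  have "compact ((\<lambda>z. f' (fst z) (snd z)) ` (K \<times> sphere 0 1))"
    by (intro compact_continuous_image compact_Times K(1) compact_sphere
        continuous_on_subset[OF cont]) auto
  then obtain C where C: "0 < C" "\<And>x u. x \<in> K \<Longrightarrow> norm u = 1 \<Longrightarrow> norm (f' x u) \<le> C"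
    by (fastforce dest!: compact_imp_bounded simp: bounded_pos)
  have "onorm (f' x) \<le> C" if x: "x \<in> K" for x
  proof (rule onorm_le)
    interpret f': bounded_linear "f' x" by (rule has_derivative_bounded_linear[OF f'[OF x]])
    fix h
    show "norm (f' x h) \<le> C * norm h"
    proof (cases "h = 0")
      case False
      have "f' x h = norm h *\<^sub>R f' x (h /\<^sub>R norm h)"
        using False by (simp add: f'.scaleR)
      then show ?thesis using C(2)[OF x, of "h /\<^sub>R norm h"] False by (simp add: mult.commute)
    qed simp
  qed
  then have "C-lipschitz_on K f"
    using C(1) by (intro bounded_derivative_imp_lipschitz[OF f' K(2)]) auto
  then show ?thesis by (rule that)
qed

lemma has_vector_derivative_imp_continuous_on:
  assumes "\<And>t. t \<in> I \<Longrightarrow> (x has_vector_derivative f t) (at t within I)"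
  shows "continuous_on I x"
  using assms by (auto simp: continuous_on_eq_continuous_within intro: has_vector_derivative_continuous)

lemma lipschitz_on_cball_solution:
  fixes F :: "'a::euclidean_space \<Rightarrow> 'a"
  assumes lip: "L-lipschitz_on (cball e R) F" and R: "0 \<le> R"
  obtains x where "x 0 = y" "continuous_on {0..} x"
    "\<And>I. is_interval I \<Longrightarrow> 0 \<in> I \<Longrightarrow> I \<subseteq> {0..} \<Longrightarrow> x ` I \<subseteq> cball e R \<Longrightarrow> is_sol F x I"
proof -
  obtain G where G: "L-lipschitz_on UNIV G" and GF: "\<And>x. x \<in> cball e R \<Longrightarrow> G x = F x"
    using lipschitz_on_cball_extension[OF lip R] by blast
  obtain x where x0: "x 0 = y"
    and x': "\<And>t. 0 \<le> t \<Longrightarrow> (x has_vector_derivative G (x t)) (at t within {0..})"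
    using lipschitz_global_solution[OF G] by blast
  have "continuous_on {0..} x"
    by (rule has_vector_derivative_imp_continuous_on) (use x' in auto)
  moreover have "is_sol F x I"
    if I: "is_interval I" "0 \<in> I" "I \<subseteq> {0..}" and xI: "x ` I \<subseteq> cball e R" for I
    unfolding is_sol_def
  proof (intro conjI ballI I)
    fix t assume t: "t \<in> I"
    have "(x has_vector_derivative G (x t)) (at t within I)"
      using has_vector_derivative_within_subset[OF x'] t I by auto
    then show "(x has_vector_derivative F (x t)) (at t within I)"
      using GF xI t by auto
  qed
  ultimately show ?thesis using that x0 by blast
qed

lemma continuity_trap:
  fixes x :: "real \<Rightarrow> 'a::real_normed_vector"
  assumes I: "is_interval I" "0 \<in> I" "I \<subseteq> {0..}" and cont: "continuous_on I x"
    and x0: "norm (x 0 - e) < \<rho>" and r: "r < \<rho>"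
    and trap: "\<And>t. t \<in> I \<Longrightarrow> (\<forall>s\<in>{0..t}. norm (x s - e) < \<rho>) \<Longrightarrow> norm (x t - e) \<le> r"
  shows "\<forall>t\<in>I. norm (x t - e) \<le> r"
proof (rule ccontr)
  assume "\<not> ?thesis"
  then obtain t1 where t1: "t1 \<in> I" "\<not> norm (x t1 - e) \<le> r" by blast
  have sub: "{0..u} \<subseteq> I" if "u \<in> I" for u
    using interval_subset_is_interval[OF I(1), of 0 u] I(2) that by simp
  define K where "K = {s \<in> {0..t1}. \<rho> \<le> norm (x s - e)}"
  have "K \<noteq> {}" using trap[OF t1(1)] t1(2) by (force simp: K_def not_less)
  moreover have "closed K" unfolding K_def
    by (intro continuous_on_closed_Collect_le continuous_intros
        continuous_on_subset[OF cont sub[OF t1(1)]])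
  moreover have Kbdd: "bdd_below K" unfolding K_def by (auto intro: bdd_belowI[of _ 0])
  ultimately have "Inf K \<in> K" by (intro closed_contains_Inf)
  define T where "T = Inf K"
  have TK: "T \<in> K" using \<open>Inf K \<in> K\<close> by (simp add: T_def)
  have T0: "T \<noteq> 0" using TK x0 by (auto simp: K_def)
  have TI: "T \<in> I" using TK sub[OF t1(1)] by (auto simp: K_def)
  have before_T: "norm (x s - e) < \<rho>" if "0 \<le> s" "s < T" for s
  proof (rule ccontr)
    assume "\<not> ?thesis"
    then have "s \<in> K" using that TK by (auto simp: K_def)
    then have "T \<le> s" unfolding T_def by (rule cInf_lower[OF _ Kbdd])
    then show False using that by simp
  qed
  have "norm (x s - e) \<le> r" if s: "s \<in> {0..<T}" for s
    by (rule trap) (use s sub[OF TI] before_T in auto)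
  then have "{0..<T} \<subseteq> {s \<in> {0..T}. norm (x s - e) \<le> r}" by auto
  moreover have "closed {s \<in> {0..T}. norm (x s - e) \<le> r}"
    by (intro continuous_on_closed_Collect_le continuous_intros
        continuous_on_subset[OF cont sub[OF TI]])
  ultimately have "closure {0..<T} \<subseteq> {s \<in> {0..T}. norm (x s - e) \<le> r}"
    by (rule closure_minimal)
  moreover have "T \<in> closure {0..<T}" using T0 TK by (auto simp: K_def)
  ultimately show False using TK r by (auto simp: K_def)
qed

lemma exp_decay_of_derivative_bound:
  fixes g g' :: "real \<Rightarrow> real"
  assumes t: "0 \<le> t"
    and g': "\<And>s. s \<in> {0..t} \<Longrightarrow> (g has_real_derivative g' s) (at s within {0..t})"
    and decay: "\<And>s. s \<in> {0..t} \<Longrightarrow> g' s \<le> - k * g s"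
  shows "g t \<le> g 0 * exp (- k * t)"
proof -
  define h where "h s = exp (k * s) * g s" for s
  have "(h has_derivative (*) (exp (k * s) * (k * g s + g' s))) (at s within {0..t})"
    if "0 \<le> s" "s \<le> t" for s
  proof -
    have "(h has_real_derivative exp (k * s) * (k * g s + g' s)) (at s within {0..t})"
      unfolding h_def[abs_def] using g'[of s] that
      by (auto intro!: derivative_eq_intros simp: algebra_simps)
    then show ?thesis by (simp add: has_field_derivative_def)
  qed
  from mvt_very_simple[OF t this] obtain \<xi> where \<xi>: "\<xi> \<in> {0..t}"
    and eq: "h t - h 0 = exp (k * \<xi>) * (k * g \<xi> + g' \<xi>) * (t - 0)"
    by blast
  have "exp (k * \<xi>) * (k * g \<xi> + g' \<xi>) \<le> 0"
    using decay[OF \<xi>] by (simp add: mult_nonneg_nonpos)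
  then have "h t \<le> h 0"
    using eq mult_nonpos_nonneg[OF _ t] by fastforce
  then show ?thesis by (simp add: h_def exp_minus field_simps)
qed

lemma has_real_derivative_compose_vector:
  fixes x :: "real \<Rightarrow> 'a::real_normed_vector"
  assumes "(x has_vector_derivative v) (at t within I)" and "(V has_derivative DV) (at (x t))"
  shows "((\<lambda>s. V (x s)) has_real_derivative DV v) (at t within I)"
proof -
  have "((V \<circ> x) has_derivative (DV \<circ> (\<lambda>h. h *\<^sub>R v))) (at t within I)"
    using assms by (auto simp: has_vector_derivative_def intro: diff_chain_within has_derivative_at_withinI)
  moreover have "DV \<circ> (\<lambda>h. h *\<^sub>R v) = (*) (DV v)"
    using linear.scaleR[OF has_derivative_linear[OF assms(2)]] by (auto simp: fun_eq_iff)
  ultimately show ?thesis by (simp add: has_field_derivative_def comp_def)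
qed

lemma tendsto_exp_neg_at_top:
  assumes "0 < (k::real)"
  shows "((\<lambda>t. exp (- k * t)) \<longlongrightarrow> 0) at_top"
proof -
  have "filterlim (\<lambda>t. - (k * t)) at_bot at_top"
    using filterlim_tendsto_pos_mult_at_top[OF tendsto_const assms filterlim_ident]
    by (simp add: filterlim_uminus_at_top)
  then show ?thesis using filterlim_compose[OF exp_at_bot] by simp
qed

section \<open>Lyapunov and Chetaev functions\<close>

locale lyapunov_function =
  fixes F :: "'a::euclidean_space \<Rightarrow> 'a" and e :: 'a
    and V :: "'a \<Rightarrow> real" and DV :: "'a \<Rightarrow> 'a \<Rightarrow> real" and \<rho> a b \<kappa> L :: real
  assumes F_e: "F e = 0"
    and V_deriv: "\<And>x. (V has_derivative DV x) (at x)"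
    and pos: "0 < \<rho>" "0 < a" "0 < b" "0 < \<kappa>"
    and V_lower: "\<And>x. a * (norm (x - e))\<^sup>2 \<le> V x"
    and V_upper: "\<And>x. V x \<le> b * (norm (x - e))\<^sup>2"
    and V_decrease: "\<And>x. norm (x - e) < \<rho> \<Longrightarrow> DV x (F x) \<le> - \<kappa> * V x"
    and F_lipschitz: "L-lipschitz_on (cball e \<rho>) F"
begin

lemma V_decay:
  assumes t: "0 \<le> t" and sol: "is_sol F x {0..t}" and near: "\<forall>s\<in>{0..t}. norm (x s - e) < \<rho>"
  shows "V (x t) \<le> V (x 0) * exp (- \<kappa> * t)"
proof (rule exp_decay_of_derivative_bound[OF t])
  fix s assume s: "s \<in> {0..t}"
  show "((\<lambda>s. V (x s)) has_real_derivative DV (x s) (F (x s))) (at s within {0..t})"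
    using sol s by (auto simp: is_sol_def intro: has_real_derivative_compose_vector V_deriv)
  show "DV (x s) (F (x s)) \<le> - \<kappa> * V (x s)"
    using V_decrease near s by simp
qed

text \<open>Chosen so that \<open>V < a r\<^sup>2\<close> on the ball of this radius, hence solutions starting there
  stay within distance \<open>r\<close> of \<open>e\<close> while \<open>V\<close> decreases.\<close>
definition entry_radius :: "real \<Rightarrow> real" where
  "entry_radius r = r * min 1 (a / b)"

lemma entry_radius_pos: "0 < r \<Longrightarrow> 0 < entry_radius r"
  using pos by (simp add: entry_radius_def)

lemma entry_radius_le: "0 \<le> r \<Longrightarrow> entry_radius r \<le> r"
  by (simp add: entry_radius_def mult_left_le)

lemma V_below_entry_radius:
  assumes "norm (y - e) < entry_radius r" "0 < r"
  shows "V y < a * r\<^sup>2"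
proof -
  have m: "0 < min 1 (a / b)" "min 1 (a / b) \<le> 1" "min 1 (a / b) \<le> a / b"
    using pos by auto
  have "V y \<le> b * (norm (y - e))\<^sup>2" by (rule V_upper)
  also have "\<dots> < b * (entry_radius r)\<^sup>2"
    using assms pos by (intro mult_strict_left_mono power_strict_mono) auto
  also have "\<dots> = b * r\<^sup>2 * (min 1 (a / b) * min 1 (a / b))"
    by (simp add: entry_radius_def power2_eq_square)
  also have "\<dots> \<le> b * r\<^sup>2 * (a / b * 1)"
    using m pos by (intro mult_left_mono mult_mono) auto
  also have "\<dots> = a * r\<^sup>2" using pos by simp
  finally show ?thesis .
qed

lemma solution_trapped:
  assumes sol: "is_sol F x I" and x0: "norm (x 0 - e) < entry_radius r" and r: "0 < r" "r < \<rho>"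
  shows "\<forall>t\<in>I. norm (x t - e) \<le> r \<and> V (x t) \<le> V (x 0) * exp (- \<kappa> * t)"
proof -
  have I: "is_interval I" "0 \<in> I" "I \<subseteq> {0..}" using sol by (auto simp: is_sol_def)
  have sub: "{0..t} \<subseteq> I" if "t \<in> I" for t
    using interval_subset_is_interval[OF I(1), of 0 t] I(2) that by simp
  have sol_t: "is_sol F x {0..t}" if "t \<in> I" for t
    using sol sub[OF that] I that
    by (auto simp: is_sol_def intro: has_vector_derivative_within_subset)
  have V0: "0 \<le> V (x 0)" using V_lower[of "x 0"] pos(2) zero_le_power2 mult_nonneg_nonneg
    by (metis less_imp_le order_trans)
  have decay: "V (x t) \<le> V (x 0) * exp (- \<kappa> * t)"
    if "t \<in> I" "\<forall>s\<in>{0..t}. norm (x s - e) < \<rho>" for t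
    using V_decay[OF _ sol_t] that I by auto
  have cont: "continuous_on I x"
    using sol by (auto simp: is_sol_def intro: has_vector_derivative_imp_continuous_on)
  have stay: "\<forall>t\<in>I. norm (x t - e) \<le> r"
  proof (rule continuity_trap[OF I cont _ r(2)])
    show "norm (x 0 - e) < \<rho>" using x0 r entry_radius_le[of r] by linarith
    fix t assume t: "t \<in> I" and near: "\<forall>s\<in>{0..t}. norm (x s - e) < \<rho>"
    have "a * (norm (x t - e))\<^sup>2 \<le> V (x 0) * exp (- \<kappa> * t)"
      using V_lower[of "x t"] decay[OF t near] by linarith
    also have "\<dots> \<le> V (x 0)" using V0 pos t I by (intro mult_left_le) auto
    also have "\<dots> < a * r\<^sup>2" by (rule V_below_entry_radius[OF x0 r(1)])
    finally have "(norm (x t - e))\<^sup>2 < r\<^sup>2" using pos by simp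
    then show "norm (x t - e) \<le> r" using r by (simp add: power_less_imp_less_base less_imp_le)
  qed
  show ?thesis using stay decay r by (force dest: sub)
qed

lemma stable: "stable_in S F e"
  unfolding stable_in_def
proof (intro allI impI)
  fix \<epsilon> :: real assume \<epsilon>: "0 < \<epsilon>"
  define r where "r = min (\<rho> / 2) (\<epsilon> / 2)"
  have r: "0 < r" "r < \<rho>" "r < \<epsilon>" using \<epsilon> pos by (auto simp: r_def)
  show "\<exists>d>0. \<forall>x I. is_sol F x I \<and> x 0 \<in> S \<and> dist (x 0) e < d \<longrightarrow> (\<forall>t\<in>I. dist (x t) e < \<epsilon>)"
  proof (intro exI[of _ "entry_radius r"] conjI allI impI ballI)
    fix x I t assume "is_sol F x I \<and> x 0 \<in> S \<and> dist (x 0) e < entry_radius r" and t: "t \<in> I"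
    then have "norm (x t - e) \<le> r"
      using solution_trapped[of x I r] r by (auto simp: dist_norm)
    then show "dist (x t) e < \<epsilon>" using r by (simp add: dist_norm)
  qed (rule entry_radius_pos[OF r(1)])
qed

lemma solution_exists:
  assumes y: "norm (y - e) < entry_radius (\<rho> / 2)"
  shows "\<exists>x. is_sol F x {0..} \<and> x 0 = y"
proof -
  obtain x where x0: "x 0 = y" and cont: "continuous_on {0..} x"
    and sol: "\<And>I. is_interval I \<Longrightarrow> 0 \<in> I \<Longrightarrow> I \<subseteq> {0..} \<Longrightarrow> x ` I \<subseteq> cball e \<rho> \<Longrightarrow> is_sol F x I"
    using lipschitz_on_cball_solution[OF F_lipschitz] pos by (metis less_imp_le)
  have r: "0 < \<rho> / 2" "\<rho> / 2 < \<rho>" using pos by auto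
  have "\<forall>t\<in>{0..}. norm (x t - e) \<le> \<rho> / 2"
  proof (rule continuity_trap[OF _ _ _ cont _ r(2)])
    show "norm (x 0 - e) < \<rho>"
      using y x0 r entry_radius_le[of "\<rho> / 2"] by simp
    fix t :: real assume t: "t \<in> {0..}" and near: "\<forall>s\<in>{0..t}. norm (x s - e) < \<rho>"
    have "is_sol F x {0..t}"
      using near t by (intro sol) (auto simp: dist_norm norm_minus_commute)
    then show "norm (x t - e) \<le> \<rho> / 2"
      using solution_trapped[of x "{0..t}" "\<rho> / 2"] y x0 r t by auto
  qed (auto simp: is_interval_ci)
  then have "x ` {0..} \<subseteq> cball e \<rho>"
    using pos by (force simp: dist_norm norm_minus_commute)
  then have "is_sol F x {0..}"
    by (intro sol) (auto simp: is_interval_ci)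
  with x0 show ?thesis by blast
qed

lemma solution_converges:
  assumes sol: "is_sol F x {0..}" and x0: "norm (x 0 - e) < entry_radius (\<rho> / 2)"
  shows "(x \<longlongrightarrow> e) at_top"
proof -
  have r: "0 < \<rho> / 2" "\<rho> / 2 < \<rho>" using pos by auto
  have bound: "norm (x t - e) \<le> sqrt (V (x 0) / a * exp (- \<kappa> * t))" if t: "0 \<le> t" for t
  proof -
    have "V (x t) \<le> V (x 0) * exp (- \<kappa> * t)"
      using solution_trapped[OF sol x0 r] t by simp
    then have "a * (norm (x t - e))\<^sup>2 \<le> V (x 0) * exp (- \<kappa> * t)"
      using V_lower[of "x t"] by linarith
    then have "(norm (x t - e))\<^sup>2 \<le> V (x 0) / a * exp (- \<kappa> * t)"
      using pos by (simp add: field_simps)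
    then show ?thesis by (rule real_le_rsqrt)
  qed
  have "((\<lambda>t. sqrt (V (x 0) / a * exp (- \<kappa> * t))) \<longlongrightarrow> sqrt (V (x 0) / a * 0)) at_top"
    by (intro tendsto_real_sqrt tendsto_mult tendsto_const tendsto_exp_neg_at_top pos)
  then have "((\<lambda>t. sqrt (V (x 0) / a * exp (- \<kappa> * t))) \<longlongrightarrow> 0) at_top"
    by simp
  then have "((\<lambda>t. x t - e) \<longlongrightarrow> 0) at_top"
  proof (rule Lim_null_comparison[rotated])
    show "\<forall>\<^sub>F t in at_top. norm (x t - e) \<le> sqrt (V (x 0) / a * exp (- \<kappa> * t))"
      using bound by (auto simp: eventually_at_top_linorder)
  qed
  then show ?thesis by (simp add: LIM_zero_iff)
qed

theorem loc_asym_stable: "loc_asym_stable_in S F e"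
  unfolding loc_asym_stable_in_def equilibrium_def attractive_in_def
  using F_e stable entry_radius_pos[of "\<rho> / 2"] pos
  by (auto intro!: exI[of _ "entry_radius (\<rho> / 2)"] solution_exists solution_converges
      simp: dist_norm)

end

locale chetaev_function =
  fixes F :: "'a::euclidean_space \<Rightarrow> 'a" and e :: 'a
    and W :: "'a \<Rightarrow> real" and DW :: "'a \<Rightarrow> 'a \<Rightarrow> real" and \<rho> b \<kappa> L :: real
  assumes W_deriv: "\<And>x. (W has_derivative DW x) (at x)"
    and pos: "0 < \<rho>" "0 < b" "0 < \<kappa>"
    and W_upper: "\<And>x. W x \<le> b * (norm (x - e))\<^sup>2"
    and W_increase: "\<And>x. norm (x - e) < \<rho> \<Longrightarrow> \<kappa> * (norm (x - e))\<^sup>2 \<le> DW x (F x)"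
    and F_lipschitz: "L-lipschitz_on (cball e \<rho>) F"
begin

lemma W_growth:
  assumes t: "0 \<le> t" and sol: "is_sol F x {0..t}" and near: "\<forall>s\<in>{0..t}. norm (x s - e) < \<rho>"
  shows "W (x 0) * exp (\<kappa> / b * t) \<le> W (x t)"
proof -
  have "- W (x t) \<le> - W (x 0) * exp (- (- \<kappa> / b) * t)"
  proof (rule exp_decay_of_derivative_bound[OF t])
    fix s assume s: "s \<in> {0..t}"
    show "((\<lambda>s. - W (x s)) has_real_derivative - DW (x s) (F (x s))) (at s within {0..t})"
      using sol s
      by (intro DERIV_minus has_real_derivative_compose_vector[OF _ W_deriv]) (auto simp: is_sol_def)
    have "\<kappa> / b * W (x s) \<le> \<kappa> * (norm (x s - e))\<^sup>2"
      using W_upper[of "x s"] pos by (simp add: field_simps mult_left_mono)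
    also have "\<dots> \<le> DW (x s) (F (x s))" using W_increase near s by simp
    finally show "- DW (x s) (F (x s)) \<le> - (- \<kappa> / b) * - W (x s)" by simp
  qed
  then show ?thesis by simp
qed

theorem not_stable:
  assumes start: "\<And>d. 0 < d \<Longrightarrow> \<exists>y\<in>S. norm (y - e) < d \<and> 0 < W y"
  shows "\<not> stable_in S F e"
proof
  assume "stable_in S F e"
  then obtain d where d: "0 < d"
    and stay: "\<And>x I. is_sol F x I \<Longrightarrow> x 0 \<in> S \<Longrightarrow> dist (x 0) e < d \<Longrightarrow> \<forall>t\<in>I. dist (x t) e < \<rho> / 2"
    using pos unfolding stable_in_def by (metis half_gt_zero)
  obtain y where y: "y \<in> S" "norm (y - e) < min d (\<rho> / 2)" and Wy: "0 < W y"
    using start[of "min d (\<rho> / 2)"] d pos by auto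
  obtain x where x0: "x 0 = y" and cont: "continuous_on {0..} x"
    and sol: "\<And>I. is_interval I \<Longrightarrow> 0 \<in> I \<Longrightarrow> I \<subseteq> {0..} \<Longrightarrow> x ` I \<subseteq> cball e \<rho> \<Longrightarrow> is_sol F x I"
    using lipschitz_on_cball_solution[OF F_lipschitz] pos by (metis less_imp_le)
  have sol_t: "is_sol F x {0..t}" if "0 \<le> t" "\<forall>s\<in>{0..t}. norm (x s - e) < \<rho>" for t
    using that by (intro sol) (auto simp: dist_norm norm_minus_commute)
  have "\<forall>t\<in>{0..}. norm (x t - e) \<le> \<rho> / 2"
  proof (rule continuity_trap[OF _ _ _ cont])
    fix t :: real assume t: "t \<in> {0..}" and near: "\<forall>s\<in>{0..t}. norm (x s - e) < \<rho>"
    have "x 0 \<in> S" "dist (x 0) e < d" using x0 y by (auto simp: dist_norm)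
    then have "\<forall>s\<in>{0..t}. dist (x s) e < \<rho> / 2"
      using stay[OF sol_t] t near by auto
    then show "norm (x t - e) \<le> \<rho> / 2"
      using t by (force simp: dist_norm)
  qed (use x0 y pos in \<open>auto simp: is_interval_ci\<close>)
  then have near: "\<forall>s\<in>{0..t}. norm (x s - e) < \<rho>" for t
    using pos by force
  define t where "t = b * (\<rho> / 2)\<^sup>2 / W y / (\<kappa> / b)"
  have t: "0 \<le> t" using Wy pos by (simp add: t_def)
  have "W y * (1 + \<kappa> / b * t) \<le> W y * exp (\<kappa> / b * t)"
    using Wy by (intro mult_left_mono exp_ge_add_one_self) auto
  also have "\<dots> \<le> W (x t)" using W_growth[OF t sol_t[OF t near] near] x0 by simp
  also have "\<dots> \<le> b * (norm (x t - e))\<^sup>2" by (rule W_upper)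
  also have "\<dots> \<le> b * (\<rho> / 2)\<^sup>2"
    using \<open>\<forall>t\<in>{0..}. norm (x t - e) \<le> \<rho> / 2\<close> t pos by (intro mult_left_mono power_mono) auto
  finally have "W y * (1 + \<kappa> / b * t) \<le> b * (\<rho> / 2)\<^sup>2" .
  moreover have "W y * (1 + \<kappa> / b * t) = W y + b * (\<rho> / 2)\<^sup>2"
    using Wy pos by (simp add: t_def field_simps)
  ultimately show False using Wy by linarith
qed

end

section \<open>Quadratic forms and linearization\<close>

lemma quadratic_coercive:
  fixes q :: "'a::euclidean_space \<Rightarrow> real"
  assumes cont: "continuous_on UNIV q" and hom: "\<And>c h. q (c *\<^sub>R h) = c\<^sup>2 * q h"
    and pos: "\<And>h. h \<noteq> 0 \<Longrightarrow> 0 < q h"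
  obtains c where "0 < c" "\<And>h. c * (norm h)\<^sup>2 \<le> q h"
proof -
  obtain b :: 'a where "b \<in> Basis" using nonempty_Basis by blast
  then have "sphere (0::'a) 1 \<noteq> {}" by (auto intro!: exI[of _ b])
  then obtain u where u: "u \<in> sphere 0 1" and min: "\<And>v. v \<in> sphere 0 1 \<Longrightarrow> q u \<le> q v"
    using continuous_attains_inf[OF compact_sphere _ continuous_on_subset[OF cont]] by blast
  have "q u * (norm h)\<^sup>2 \<le> q h" for h
  proof (cases "h = 0")
    case True
    then show ?thesis using hom[of 0 0] by simp
  next
    case False
    have "q u \<le> q (h /\<^sub>R norm h)" by (rule min) (use False in simp)
    moreover have "q h = (norm h)\<^sup>2 * q (h /\<^sub>R norm h)"
      using hom[of "norm h" "h /\<^sub>R norm h"] False by simp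
    ultimately show ?thesis by (metis mult.commute mult_left_mono zero_le_power2)
  qed
  moreover have "0 < q u" using u by (intro pos) auto
  ultimately show ?thesis using that by blast
qed

lemma linearization_bilinear_error:
  fixes F :: "'a::real_normed_vector \<Rightarrow> 'a" and B :: "'a \<Rightarrow> 'a \<Rightarrow> real"
  assumes "F e = 0" and "(F has_derivative J) (at e)" and "bounded_bilinear B" and "0 < \<epsilon>"
  obtains \<rho> where "0 < \<rho>"
    "\<And>x. norm (x - e) < \<rho> \<Longrightarrow> \<bar>B (x - e) (F x) - B (x - e) (J (x - e))\<bar> \<le> \<epsilon> * (norm (x - e))\<^sup>2"
proof -
  interpret B: bounded_bilinear B by fact
  obtain K where K: "0 < K" "\<And>h k. \<bar>B h k\<bar> \<le> norm h * norm k * K"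
    using B.pos_bounded by auto
  obtain \<rho> where \<rho>: "0 < \<rho>"
    and lin: "\<And>x. norm (x - e) < \<rho> \<Longrightarrow> norm (F x - F e - J (x - e)) \<le> \<epsilon> / K * norm (x - e)"
    using assms(2,4) K(1) unfolding has_derivative_at_alt by (metis divide_pos_pos)
  have "\<bar>B (x - e) (F x) - B (x - e) (J (x - e))\<bar> \<le> \<epsilon> * (norm (x - e))\<^sup>2"
    if x: "norm (x - e) < \<rho>" for x
  proof -
    have "\<bar>B (x - e) (F x) - B (x - e) (J (x - e))\<bar> = \<bar>B (x - e) (F x - J (x - e))\<bar>"
      by (simp add: B.diff_right)
    also have "\<dots> \<le> norm (x - e) * norm (F x - J (x - e)) * K" by (rule K(2))
    also have "\<dots> \<le> norm (x - e) * (\<epsilon> / K * norm (x - e)) * K"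
      using K lin[OF x] assms(1) by (intro mult_right_mono mult_left_mono) auto
    also have "\<dots> = \<epsilon> * (norm (x - e))\<^sup>2"
      using K by (simp add: power2_eq_square)
    finally show ?thesis .
  qed
  then show ?thesis using that \<rho> by blast
qed

lemma linearization_bilinear_lower_bound:
  fixes F :: "'a::real_normed_vector \<Rightarrow> 'a" and B :: "'a \<Rightarrow> 'a \<Rightarrow> real"
  assumes "F e = 0" and "(F has_derivative J) (at e)" and "bounded_bilinear B" and "0 < c"
    and coercive: "\<And>h. c * (norm h)\<^sup>2 \<le> B h (J h)"
  obtains \<rho> where "0 < \<rho>" "\<And>x. norm (x - e) < \<rho> \<Longrightarrow> c / 2 * (norm (x - e))\<^sup>2 \<le> B (x - e) (F x)"
proof -
  obtain \<rho> where "0 < \<rho>"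
    and err: "\<And>x. norm (x - e) < \<rho> \<Longrightarrow> \<bar>B (x - e) (F x) - B (x - e) (J (x - e))\<bar> \<le> c / 2 * (norm (x - e))\<^sup>2"
    using linearization_bilinear_error[OF assms(1-3), of "c / 2"] \<open>0 < c\<close> by auto
  moreover have "c / 2 * (norm (x - e))\<^sup>2 \<le> B (x - e) (F x)" if "norm (x - e) < \<rho>" for x
    using err[OF that] coercive[of "x - e"] by linarith
  ultimately show ?thesis using that by blast
qed

lemma bilinear_coercive_along:
  fixes B :: "'a::euclidean_space \<Rightarrow> 'a \<Rightarrow> real"
  assumes "bounded_bilinear B" and "bounded_linear J" and pos: "\<And>h. h \<noteq> 0 \<Longrightarrow> 0 < B h (J h)"
  obtains c where "0 < c" "\<And>h. c * (norm h)\<^sup>2 \<le> B h (J h)"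
proof (rule quadratic_coercive)
  interpret B: bounded_bilinear B by fact
  interpret J: bounded_linear J by fact
  show "continuous_on UNIV (\<lambda>h. B h (J h))"
    by (intro B.continuous_on continuous_on_id J.continuous_on)
  show "B (c *\<^sub>R h) (J (c *\<^sub>R h)) = c\<^sup>2 * B h (J h)" for c h
    by (simp add: J.scaleR B.scaleR_left B.scaleR_right power2_eq_square)
qed (use pos that in auto)

lemma bilinear_bounded_quadratic:
  assumes "bounded_bilinear (B :: 'a::real_normed_vector \<Rightarrow> 'a \<Rightarrow> real)"
  obtains K where "0 < K" "\<And>h. B h h \<le> K * (norm h)\<^sup>2"
proof -
  interpret B: bounded_bilinear B by fact
  obtain K where "0 < K" "\<And>h k. \<bar>B h k\<bar> \<le> norm h * norm k * K"
    using B.pos_bounded by auto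
  then show ?thesis
    using that[of K] by (smt (verit) mult.commute power2_eq_square)
qed

lemma symmetric_bilinear_has_derivative:
  fixes B :: "'a::real_normed_vector \<Rightarrow> 'a \<Rightarrow> real"
  assumes "bounded_bilinear B" and sym: "\<And>h k. B h k = B k h"
  shows "((\<lambda>x. B (x - e) (x - e)) has_derivative (\<lambda>k. 2 * B (x - e) k)) (at x)"
proof -
  interpret B: bounded_bilinear B by fact
  have "((\<lambda>x. B (x - e) (x - e)) has_derivative (\<lambda>k. B (x - e) k + B k (x - e))) (at x)"
    by (intro B.FDERIV derivative_eq_intros) auto
  then show ?thesis by (simp add: sym[of _ "x - e"])
qed

theorem quadratic_lyapunov_loc_asym_stable:
  fixes F :: "'a::euclidean_space \<Rightarrow> 'a" and B :: "'a \<Rightarrow> 'a \<Rightarrow> real"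
  assumes Fe: "F e = 0" and F': "(F has_derivative J) (at e)"
    and B: "bounded_bilinear B" and sym: "\<And>h k. B h k = B k h"
    and B_pos: "\<And>h. h \<noteq> 0 \<Longrightarrow> 0 < B h h"
    and B_decrease: "\<And>h. h \<noteq> 0 \<Longrightarrow> B h (J h) < 0"
    and R: "0 < R" and lip: "L-lipschitz_on (cball e R) F"
  shows "loc_asym_stable_in S F e"
proof -
  interpret B: bounded_bilinear B by fact
  have J: "bounded_linear J" by (rule has_derivative_bounded_linear[OF F'])
  obtain a where a: "0 < a" "\<And>h. a * (norm h)\<^sup>2 \<le> B h h"
    using bilinear_coercive_along[OF B bounded_linear_ident] B_pos by blast
  obtain c where c: "0 < c" "\<And>h. c * (norm h)\<^sup>2 \<le> B h (- J h)"
    using bilinear_coercive_along[OF B bounded_linear_minus[OF J]] B_decrease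
    by (metis B.minus_right neg_0_less_iff_less)
  obtain K where K: "0 < K" "\<And>h. B h h \<le> K * (norm h)\<^sup>2"
    using bilinear_bounded_quadratic[OF B] by blast
  obtain \<rho> where \<rho>: "0 < \<rho>" and decrease: "\<And>x. norm (x - e) < \<rho> \<Longrightarrow> c / 2 * (norm (x - e))\<^sup>2 \<le> B (x - e) (- F x)"
    using linearization_bilinear_lower_bound[of "\<lambda>x. - F x" e "\<lambda>h. - J h" B c] Fe F' B c
    by (auto intro: has_derivative_minus)
  interpret lyapunov_function F e "\<lambda>x. B (x - e) (x - e)" "\<lambda>x k. 2 * B (x - e) k"
    "min \<rho> R" a K "c / K" L
  proof
    show "((\<lambda>x. B (x - e) (x - e)) has_derivative (\<lambda>k. 2 * B (x - e) k)) (at x)" for x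
      by (rule symmetric_bilinear_has_derivative[OF B sym])
    show "2 * B (x - e) (F x) \<le> - (c / K) * B (x - e) (x - e)" if "norm (x - e) < min \<rho> R" for x
    proof -
      have "c / K * B (x - e) (x - e) \<le> c * (norm (x - e))\<^sup>2"
        using K(2)[of "x - e"] K(1) c(1) by (simp add: field_simps mult_left_mono)
      also have "\<dots> \<le> 2 * B (x - e) (- F x)" using decrease[of x] that by simp
      finally show ?thesis by (simp add: B.minus_right)
    qed
    show "L-lipschitz_on (cball e (min \<rho> R)) F"
      by (rule lipschitz_on_subset[OF lip]) auto
  qed (use Fe \<rho> R a K c in auto)
  show ?thesis by (rule loc_asym_stable)
qed

theorem quadratic_chetaev_not_stable:
  fixes F :: "'a::euclidean_space \<Rightarrow> 'a" and B :: "'a \<Rightarrow> 'a \<Rightarrow> real"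
  assumes Fe: "F e = 0" and F': "(F has_derivative J) (at e)"
    and B: "bounded_bilinear B" and sym: "\<And>h k. B h k = B k h"
    and B_increase: "\<And>h. h \<noteq> 0 \<Longrightarrow> 0 < B h (J h)"
    and R: "0 < R" and lip: "L-lipschitz_on (cball e R) F"
    and start: "\<And>d. 0 < d \<Longrightarrow> \<exists>y\<in>S. norm (y - e) < d \<and> 0 < B (y - e) (y - e)"
  shows "\<not> stable_in S F e"
proof -
  have J: "bounded_linear J" by (rule has_derivative_bounded_linear[OF F'])
  obtain c where c: "0 < c" "\<And>h. c * (norm h)\<^sup>2 \<le> B h (J h)"
    using bilinear_coercive_along[OF B J] B_increase by blast
  obtain K where K: "0 < K" "\<And>h. B h h \<le> K * (norm h)\<^sup>2"
    using bilinear_bounded_quadratic[OF B] by blast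
  obtain \<rho> where \<rho>: "0 < \<rho>" and increase: "\<And>x. norm (x - e) < \<rho> \<Longrightarrow> c / 2 * (norm (x - e))\<^sup>2 \<le> B (x - e) (F x)"
    using linearization_bilinear_lower_bound[OF Fe F' B c] by blast
  interpret chetaev_function F e "\<lambda>x. B (x - e) (x - e)" "\<lambda>x k. 2 * B (x - e) k" "min \<rho> R" K c L
  proof
    show "((\<lambda>x. B (x - e) (x - e)) has_derivative (\<lambda>k. 2 * B (x - e) k)) (at x)" for x
      by (rule symmetric_bilinear_has_derivative[OF B sym])
    show "c * (norm (x - e))\<^sup>2 \<le> 2 * B (x - e) (F x)" if "norm (x - e) < min \<rho> R" for x
      using increase[of x] that by simp
    show "L-lipschitz_on (cball e (min \<rho> R)) F"
      by (rule lipschitz_on_subset[OF lip]) auto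
  qed (use \<rho> R K c in auto)
  show ?thesis by (rule not_stable[OF start])
qed

definition diagonal_form :: "real \<Rightarrow> real \<Rightarrow> real \<Rightarrow> 'a \<Rightarrow> 'a \<Rightarrow> 'a \<Rightarrow> 'a::real_inner \<Rightarrow> 'a \<Rightarrow> real" where
  "diagonal_form w1 w2 w3 c1 c2 c3 h k =
     w1 * inner c1 h * inner c1 k + w2 * inner c2 h * inner c2 k + w3 * inner c3 h * inner c3 k"

lemma diagonal_form_sym: "diagonal_form w1 w2 w3 c1 c2 c3 h k = diagonal_form w1 w2 w3 c1 c2 c3 k h"
  by (simp add: diagonal_form_def mult_ac)

lemma bounded_bilinear_diagonal_form: "bounded_bilinear (diagonal_form w1 w2 w3 c1 c2 c3)"
proof
  let ?K = "\<bar>w1\<bar> * (norm c1)\<^sup>2 + \<bar>w2\<bar> * (norm c2)\<^sup>2 + \<bar>w3\<bar> * (norm c3)\<^sup>2"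
  have summand: "\<bar>w * inner c h * inner c k\<bar> \<le> \<bar>w\<bar> * (norm c)\<^sup>2 * (norm h * norm k)" for w and c h k :: 'a
  proof -
    have "\<bar>w * inner c h * inner c k\<bar> = \<bar>w\<bar> * (\<bar>inner c h\<bar> * \<bar>inner c k\<bar>)" by (simp add: abs_mult)
    also have "\<dots> \<le> \<bar>w\<bar> * ((norm c * norm h) * (norm c * norm k))"
      by (intro mult_left_mono mult_mono Cauchy_Schwarz_ineq2) auto
    finally show ?thesis by (simp add: power2_eq_square mult_ac)
  qed
  show "\<exists>K. \<forall>h k. norm (diagonal_form w1 w2 w3 c1 c2 c3 h k) \<le> norm h * norm k * K"
  proof (intro exI allI)
    fix h k :: 'a
    show "norm (diagonal_form w1 w2 w3 c1 c2 c3 h k) \<le> norm h * norm k * ?K"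
      using summand[of w1 c1 h k] summand[of w2 c2 h k] summand[of w3 c3 h k]
      unfolding diagonal_form_def real_norm_def by (simp add: algebra_simps abs_triangle_ineq4)
        (smt (verit, best))
  qed
qed (simp_all add: diagonal_form_def inner_add_right inner_add_left algebra_simps)

lemma diagonal_form_pos:
  assumes "0 < w1" "0 < w2" "0 < w3" and h: "h \<noteq> 0"
    and inj: "inner c1 h = 0 \<Longrightarrow> inner c2 h = 0 \<Longrightarrow> inner c3 h = 0 \<Longrightarrow> h = 0"
  shows "0 < diagonal_form w1 w2 w3 c1 c2 c3 h h"
proof -
  have eq: "diagonal_form w1 w2 w3 c1 c2 c3 h h
      = w1 * (inner c1 h)\<^sup>2 + w2 * (inner c2 h)\<^sup>2 + w3 * (inner c3 h)\<^sup>2"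
    by (simp add: diagonal_form_def power2_eq_square mult_ac)
  have nonneg: "0 \<le> w1 * (inner c1 h)\<^sup>2" "0 \<le> w2 * (inner c2 h)\<^sup>2" "0 \<le> w3 * (inner c3 h)\<^sup>2"
    using assms(1-3) by simp_all
  have "inner c1 h \<noteq> 0 \<or> inner c2 h \<noteq> 0 \<or> inner c3 h \<noteq> 0" using inj h by blast
  then have "0 < w1 * (inner c1 h)\<^sup>2 \<or> 0 < w2 * (inner c2 h)\<^sup>2 \<or> 0 < w3 * (inner c3 h)\<^sup>2"
    using assms(1-3) by auto
  then show ?thesis unfolding eq using nonneg by linarith
qed

section \<open>Positivity and Routh--Hurwitz lemmas\<close>

lemma coupling_term_bound:
  fixes \<kappa> \<delta> a b u v X Y Z :: real
  assumes \<kappa>: "0 < \<kappa>" and \<delta>: "0 < \<delta>"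
    and small: "\<kappa> * u\<^sup>2 \<le> \<delta> * a / 2" "\<kappa> * v\<^sup>2 \<le> \<delta> * b / 2"
  shows "- (\<kappa> * Z * (u * X + v * Y)) \<le> (\<kappa> * \<delta> * Z\<^sup>2 + a * X\<^sup>2 + b * Y\<^sup>2) / 2"
proof -
  define w where "w = u * X + v * Y"
  have "0 \<le> \<kappa> / (2 * \<delta>) * (\<delta> * Z + w)\<^sup>2" using \<kappa> \<delta> by simp
  also have "\<dots> = \<kappa> * \<delta> / 2 * Z\<^sup>2 + \<kappa> * Z * w + \<kappa> / (2 * \<delta>) * w\<^sup>2"
    using \<delta> by (simp add: field_simps power2_eq_square)
  finally have young: "- (\<kappa> * Z * w) \<le> \<kappa> * \<delta> / 2 * Z\<^sup>2 + \<kappa> / (2 * \<delta>) * w\<^sup>2" by linarith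
  have "w\<^sup>2 \<le> 2 * u\<^sup>2 * X\<^sup>2 + 2 * v\<^sup>2 * Y\<^sup>2"
  proof -
    have "2 * u\<^sup>2 * X\<^sup>2 + 2 * v\<^sup>2 * Y\<^sup>2 - w\<^sup>2 = (u * X - v * Y)\<^sup>2"
      by (simp add: w_def power2_eq_square algebra_simps)
    then show ?thesis using zero_le_power2[of "u * X - v * Y"] by linarith
  qed
  then have "\<kappa> / (2 * \<delta>) * w\<^sup>2 \<le> \<kappa> / (2 * \<delta>) * (2 * u\<^sup>2 * X\<^sup>2 + 2 * v\<^sup>2 * Y\<^sup>2)"
    using \<kappa> \<delta> by (intro mult_left_mono) auto
  also have "\<dots> = (\<kappa> * u\<^sup>2 / \<delta>) * X\<^sup>2 + (\<kappa> * v\<^sup>2 / \<delta>) * Y\<^sup>2"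
    using \<delta> by (simp add: field_simps)
  also have "\<dots> \<le> a / 2 * X\<^sup>2 + b / 2 * Y\<^sup>2"
    using small \<delta> by (intro add_mono mult_right_mono) (simp_all add: field_simps)
  finally show ?thesis using young by (simp add: w_def field_simps)
qed

lemma quadratic_small_coupling_pos:
  fixes a b \<delta> u v :: real
  assumes a: "0 < a" and b: "0 < b" and \<delta>: "0 < \<delta>"
  obtains \<kappa> where "0 < \<kappa>"
    "\<And>X Y Z Q. a * X\<^sup>2 + b * Y\<^sup>2 \<le> Q \<Longrightarrow> X \<noteq> 0 \<or> Y \<noteq> 0 \<or> Z \<noteq> 0
       \<Longrightarrow> 0 < Q + \<kappa> * \<delta> * Z\<^sup>2 + \<kappa> * Z * (u * X + v * Y)"
proof
  define \<kappa> where "\<kappa> = \<delta> * min a b / (2 * (u\<^sup>2 + v\<^sup>2) + 1)"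
  have den: "0 < 2 * (u\<^sup>2 + v\<^sup>2) + 1" by (simp add: add_nonneg_pos)
  show \<kappa>: "0 < \<kappa>" using a b \<delta> den by (simp add: \<kappa>_def)
  have small: "\<kappa> * s\<^sup>2 \<le> \<delta> * c / 2" if "s\<^sup>2 \<le> u\<^sup>2 + v\<^sup>2" "min a b \<le> c" for s c
  proof -
    have "\<kappa> * s\<^sup>2 = \<delta> * min a b * (s\<^sup>2 / (2 * (u\<^sup>2 + v\<^sup>2) + 1))" by (simp add: \<kappa>_def)
    also have "\<dots> \<le> \<delta> * c * (1 / 2)"
      using that den a b \<delta> by (intro mult_mono mult_left_mono) (auto simp: field_simps)
    finally show ?thesis by simp
  qed
  fix X Y Z Q :: real assume Q: "a * X\<^sup>2 + b * Y\<^sup>2 \<le> Q" and nz: "X \<noteq> 0 \<or> Y \<noteq> 0 \<or> Z \<noteq> 0"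
  have "- (\<kappa> * Z * (u * X + v * Y)) \<le> (\<kappa> * \<delta> * Z\<^sup>2 + a * X\<^sup>2 + b * Y\<^sup>2) / 2"
    by (rule coupling_term_bound[OF \<kappa> \<delta> small small]) auto
  moreover have "0 < a * X\<^sup>2 + b * Y\<^sup>2 + \<kappa> * \<delta> * Z\<^sup>2"
  proof -
    have "0 \<le> a * X\<^sup>2" "0 \<le> b * Y\<^sup>2" "0 \<le> \<kappa> * \<delta> * Z\<^sup>2"
      using a b \<kappa> \<delta> by simp_all
    moreover have "0 < a * X\<^sup>2 \<or> 0 < b * Y\<^sup>2 \<or> 0 < \<kappa> * \<delta> * Z\<^sup>2"
      using nz a b \<kappa> \<delta> by auto
    ultimately show ?thesis by linarith
  qed
  ultimately show "0 < Q + \<kappa> * \<delta> * Z\<^sup>2 + \<kappa> * Z * (u * X + v * Y)"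
    using Q by (simp add: field_simps)
qed

lemma binary_quadratic_lower_bound:
  fixes P Q C X Y :: real
  assumes P: "0 < P" and Q: "0 < Q"
  shows "(P * Q - C\<^sup>2) / (2 * Q) * X\<^sup>2 + (P * Q - C\<^sup>2) / (2 * P) * Y\<^sup>2
           \<le> P * X\<^sup>2 - 2 * C * X * Y + Q * Y\<^sup>2"
proof -
  have "P * X\<^sup>2 - 2 * C * X * Y + Q * Y\<^sup>2
          - ((P * Q - C\<^sup>2) / (2 * Q) * X\<^sup>2 + (P * Q - C\<^sup>2) / (2 * P) * Y\<^sup>2)
      = P / 2 * (X - C * Y / P)\<^sup>2 + Q / 2 * (Y - C * X / Q)\<^sup>2"
    using P Q by (simp add: field_simps power2_eq_square)
  moreover have "0 \<le> P / 2 * (X - C * Y / P)\<^sup>2 + Q / 2 * (Y - C * X / Q)\<^sup>2"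
    using P Q by simp
  ultimately show ?thesis by linarith
qed

text \<open>The Routh--Hurwitz conditions are open, so they survive replacing \<open>\<lambda>\<close> by \<open>\<lambda> - l\<close>
  for small \<open>l > 0\<close>; the shifted coefficients are those of the characteristic polynomial
  of \<open>J + l\<close>.\<close>
lemma routh_hurwitz_shift:
  fixes a1 a2 a3 :: real
  assumes "0 < a1" "0 < a3" "a3 < a1 * a2"
  obtains l where "0 < l" "0 < a1 - 3 * l" "0 < a3 - a2 * l + a1 * l\<^sup>2 - l ^ 3"
    "a3 - a2 * l + a1 * l\<^sup>2 - l ^ 3 < (a1 - 3 * l) * (a2 - 2 * a1 * l + 3 * l\<^sup>2)"
proof -
  have near_0: "\<forall>\<^sub>F l in at_right 0. 0 < f l" if "continuous_on UNIV f" "0 < f 0" for f :: "real \<Rightarrow> real"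
  proof -
    have "(f \<longlongrightarrow> f 0) (at_right 0)"
      using that(1) by (auto simp: continuous_on_def intro: tendsto_within_subset)
    then show ?thesis using that(2) by (rule order_tendstoD)
  qed
  have "\<forall>\<^sub>F l in at_right 0. 0 < a1 - 3 * l"
    by (rule near_0) (use assms in \<open>auto intro!: continuous_intros\<close>)
  moreover have "\<forall>\<^sub>F l in at_right 0. 0 < a3 - a2 * l + a1 * l\<^sup>2 - l ^ 3"
    by (rule near_0) (use assms in \<open>auto intro!: continuous_intros\<close>)
  moreover have "\<forall>\<^sub>F l in at_right 0.
      0 < (a1 - 3 * l) * (a2 - 2 * a1 * l + 3 * l\<^sup>2) - (a3 - a2 * l + a1 * l\<^sup>2 - l ^ 3)"
    by (rule near_0) (use assms in \<open>auto intro!: continuous_intros\<close>)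
  moreover have "\<forall>\<^sub>F l in at_right 0. 0 < (l::real)" by (rule eventually_at_right_less)
  ultimately have "\<forall>\<^sub>F l in at_right 0. 0 < l \<and> 0 < a1 - 3 * l \<and> 0 < a3 - a2 * l + a1 * l\<^sup>2 - l ^ 3 \<and>
      0 < (a1 - 3 * l) * (a2 - 2 * a1 * l + 3 * l\<^sup>2) - (a3 - a2 * l + a1 * l\<^sup>2 - l ^ 3)"
    by eventually_elim auto
  then obtain l where "0 < l \<and> 0 < a1 - 3 * l \<and> 0 < a3 - a2 * l + a1 * l\<^sup>2 - l ^ 3 \<and>
      0 < (a1 - 3 * l) * (a2 - 2 * a1 * l + 3 * l\<^sup>2) - (a3 - a2 * l + a1 * l\<^sup>2 - l ^ 3)"
    using eventually_happens'[OF trivial_limit_at_right_real] by blast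
  then show ?thesis using that by auto
qed

text \<open>Lyapunov function for \<open>J\<close> when, in the coordinates \<open>y\<^sub>i = \<langle>c\<^sub>i, h\<rangle>\<close>, the shifted map
  \<open>J + l\<close> is the companion matrix of a Hurwitz polynomial \<open>\<lambda>\<^sup>3 + b\<^sub>1\<lambda>\<^sup>2 + b\<^sub>2\<lambda> + b\<^sub>3\<close>.\<close>
lemma routh_hurwitz_companion_lyapunov:
  fixes J :: "'a::real_inner \<Rightarrow> 'a" and c1 c2 c3 :: 'a
  assumes J1: "\<And>h. inner c1 (J h) = inner c2 h - l * inner c1 h"
    and J2: "\<And>h. inner c2 (J h) = inner c3 h - l * inner c2 h"
    and J3: "\<And>h. inner c3 (J h) = - b3 * inner c1 h - b2 * inner c2 h - b1 * inner c3 h - l * inner c3 h"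
    and b: "0 < b1" "0 < b3" "b3 < b1 * b2" and l: "0 < l"
    and inj: "\<And>h. inner c1 h = 0 \<Longrightarrow> inner c2 h = 0 \<Longrightarrow> inner c3 h = 0 \<Longrightarrow> h = 0"
  defines "B \<equiv> diagonal_form (b1 / 2) (b3 / 2) ((b1 * b2 - b3) / 2) (c3 + b1 *\<^sub>R c2) (b1 *\<^sub>R c1 + c2) c2"
  shows "\<And>h. h \<noteq> 0 \<Longrightarrow> 0 < B h h" and "\<And>h. h \<noteq> 0 \<Longrightarrow> B h (J h) < 0"
proof -
  fix h :: 'a assume h: "h \<noteq> 0"
  show pos: "0 < B h h"
    unfolding B_def
    by (rule diagonal_form_pos[OF _ _ _ h]) (use b inj in \<open>auto simp: inner_add_left\<close>)
  define y1 y2 y3 where "y1 = inner c1 h" and "y2 = inner c2 h" and "y3 = inner c3 h"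
  have "B h (J h) = - (b1 * (b1 * b2 - b3) / 2 * y2\<^sup>2) - l * B h h"
    by (simp add: B_def diagonal_form_def inner_add_left J1 J2 J3 y1_def y2_def y3_def
        power2_eq_square field_simps)
  moreover have "0 \<le> b1 * (b1 * b2 - b3) / 2 * y2\<^sup>2" using b by simp
  moreover have "0 < l * B h h" using pos l by simp
  ultimately show "B h (J h) < 0" by linarith
qed

text \<open>In the coordinates \<open>(\<langle>z,h\<rangle>, \<langle>s,h\<rangle>, \<langle>w,h\<rangle>)\<close> the map \<open>J\<close> has the matrix
  \<open>[[0, -k, 0], [p, -q, -m], [g, -h', -f]]\<close>, whose characteristic polynomial
  \<open>\<lambda>\<^sup>3 + a\<^sub>1\<lambda>\<^sup>2 + a\<^sub>2\<lambda> + a\<^sub>3\<close> is Hurwitz under the sign conditions below.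
  The companion coordinates of \<open>J + l\<close> are built from the rows of that matrix.\<close>
lemma hurwitz_coordinates_lyapunov_form:
  fixes J :: "'a::real_inner \<Rightarrow> 'a" and z s w :: 'a
  assumes Jz: "\<And>h. inner z (J h) = - k * inner s h"
    and Js: "\<And>h. inner s (J h) = p * inner z h - q * inner s h - m * inner w h"
    and Jw: "\<And>h. inner w (J h) = g * inner z h - h' * inner s h - f * inner w h"
    and pos: "0 < k" "0 < p" "0 < q" "0 < m" "0 < g" "0 < f"
    and det: "m * g < p * f" and minor: "m * h' < q * f"
    and inj: "\<And>h. inner z h = 0 \<Longrightarrow> inner s h = 0 \<Longrightarrow> inner w h = 0 \<Longrightarrow> h = 0"
  obtains B :: "'a \<Rightarrow> 'a \<Rightarrow> real" where "bounded_bilinear B" "\<And>h k. B h k = B k h"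
    "\<And>h. h \<noteq> 0 \<Longrightarrow> 0 < B h h" "\<And>h. h \<noteq> 0 \<Longrightarrow> B h (J h) < 0"
proof -
  define a1 a2 a3 where "a1 = q + f" and "a2 = q * f - m * h' + k * p" and "a3 = k * (p * f - m * g)"
  have "0 < a1" "0 < a3" using pos det by (simp_all add: a1_def a3_def)
  moreover have "a3 < a1 * a2"
  proof -
    have "a1 * a2 - a3 = (q + f) * (q * f - m * h') + k * p * q + k * m * g"
      by (simp add: a1_def a2_def a3_def algebra_simps)
    moreover have "0 < (q + f) * (q * f - m * h')" "0 < k * p * q" "0 < k * m * g"
      using pos minor by simp_all
    ultimately show ?thesis by linarith
  qed
  ultimately obtain l where l: "0 < l" "0 < a1 - 3 * l" "0 < a3 - a2 * l + a1 * l\<^sup>2 - l ^ 3"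
    "a3 - a2 * l + a1 * l\<^sup>2 - l ^ 3 < (a1 - 3 * l) * (a2 - 2 * a1 * l + 3 * l\<^sup>2)"
    by (rule routh_hurwitz_shift)
  define c2 c3 where "c2 = l *\<^sub>R z - k *\<^sub>R s"
    and "c3 = (l\<^sup>2 - k * p) *\<^sub>R z + (k * (q - 2 * l)) *\<^sub>R s + (k * m) *\<^sub>R w"
  define b1 b2 b3 where "b1 = a1 - 3 * l" and "b2 = a2 - 2 * a1 * l + 3 * l\<^sup>2"
    and "b3 = a3 - a2 * l + a1 * l\<^sup>2 - l ^ 3"
  have J1: "inner z (J h) = inner c2 h - l * inner z h" for h
    by (simp add: Jz c2_def inner_diff_left)
  have J2: "inner c2 (J h) = inner c3 h - l * inner c2 h" for h
    by (simp add: Jz Js c2_def c3_def inner_diff_left inner_add_left power2_eq_square algebra_simps)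
  have J3: "inner c3 (J h) = - b3 * inner z h - b2 * inner c2 h - b1 * inner c3 h - l * inner c3 h" for h
    by (simp add: Jz Js Jw c2_def c3_def b1_def b2_def b3_def a1_def a2_def a3_def
        inner_diff_left inner_add_left power2_eq_square power3_eq_cube algebra_simps)
  have c_inj: "h = 0" if "inner z h = 0" "inner c2 h = 0" "inner c3 h = 0" for h
    using that pos by (intro inj) (auto simp: c2_def c3_def inner_diff_left inner_add_left)
  have b: "0 < b1" "0 < b3" "b3 < b1 * b2" using l by (simp_all add: b1_def b2_def b3_def)
  define B where "B = diagonal_form (b1 / 2) (b3 / 2) ((b1 * b2 - b3) / 2) (c3 + b1 *\<^sub>R c2) (b1 *\<^sub>R z + c2) c2"
  show ?thesis
  proof (rule that[of B])
    show "bounded_bilinear B"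
      unfolding B_def by (rule bounded_bilinear_diagonal_form)
    show "B h k = B k h" for h k
      unfolding B_def by (rule diagonal_form_sym)
    fix h :: 'a assume "h \<noteq> 0"
    then show "0 < B h h" and "B h (J h) < 0"
      using routh_hurwitz_companion_lyapunov[OF J1 J2 J3 b l(1)] c_inj unfolding B_def by blast+
  qed
qed

section \<open>The system \<open>X' = \<Phi>\<^sub>2(X)\<close>\<close>

locale Phi2_system =
  fixes r \<rho> \<sigma> \<mu> \<delta> \<nu> \<eta> \<gamma> :: real
  assumes r: "0 < r" "r < 1"
    and pos: "0 < \<rho>" "0 < \<sigma>" "0 < \<mu>" "0 < \<delta>" "0 < \<nu>" "0 < \<eta>" "0 < \<gamma>"
begin

abbreviation F :: "real \<times> real \<times> real \<Rightarrow> real \<times> real \<times> real" where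
  "F \<equiv> Phi2 r \<rho> \<sigma> \<mu> \<delta> \<nu> \<eta> \<gamma>"

definition jacobian :: "real \<times> real \<times> real \<Rightarrow> real \<times> real \<times> real \<Rightarrow> real \<times> real \<times> real" where
  "jacobian p h = (case p of (M, A, U) \<Rightarrow> case h of (m, a, u) \<Rightarrow>
     let E = exp (- \<sigma> * (M + A + U)); dU = E * u - \<sigma> * U * E * (m + a + u) in
     (r * \<rho> * dU - \<mu> * m, (1 - r) * \<rho> * dU - \<nu> * \<gamma> * m + \<eta> * u - \<delta> * a,
      \<nu> * \<gamma> * m - \<eta> * u - \<delta> * u))"

lemma F_has_derivative: "(F has_derivative jacobian p) (at p within S)"
  unfolding Phi2_def[abs_def] jacobian_def[abs_def] Let_def case_prod_unfold
  by (auto intro!: derivative_eq_intros simp: fun_eq_iff algebra_simps)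

lemma F_lipschitz_on_cball:
  obtains L where "L-lipschitz_on (cball e R) F"
proof (rule continuous_derivative_imp_lipschitz_on)
  show "(F has_derivative jacobian x) (at x within cball e R)" for x
    by (rule F_has_derivative)
  show "continuous_on (cball e R \<times> UNIV) (\<lambda>z. jacobian (fst z) (snd z))"
    unfolding jacobian_def Let_def case_prod_unfold by (intro continuous_intros)
qed auto

lemma F_origin: "F (0, 0, 0) = 0"
  by (simp add: Phi2_def zero_prod_def)

lemma jacobian_origin:
  "jacobian (0, 0, 0) (m, a, u) =
     (r * \<rho> * u - \<mu> * m, (1 - r) * \<rho> * u - \<nu> * \<gamma> * m + \<eta> * u - \<delta> * a, \<nu> * \<gamma> * m - \<eta> * u - \<delta> * u)"
  by (simp add: jacobian_def)

lemma subthreshold_discriminant: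
  assumes N: "N_M r \<rho> \<mu> \<delta> \<nu> \<eta> \<gamma> < 1"
  shows "(r * \<rho> * \<nu> * \<gamma>)\<^sup>2 < (\<nu> * \<gamma> * \<mu>) * (r * \<rho> * (\<eta> + \<delta>))"
proof -
  have C: "0 < r * \<rho> * \<nu> * \<gamma>" using r pos by simp
  have "r * \<rho> * \<nu> * \<gamma> < \<mu> * (\<delta> + \<eta>)"
    using N pos unfolding N_M_def by (simp add: divide_less_eq mult_ac add_pos_pos)
  then have "(r * \<rho> * \<nu> * \<gamma>) * (r * \<rho> * \<nu> * \<gamma>) < (r * \<rho> * \<nu> * \<gamma>) * (\<mu> * (\<delta> + \<eta>))"
    using C by (rule mult_strict_left_mono)
  then show ?thesis by (simp add: power2_eq_square algebra_simps)
qed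

theorem origin_loc_asym_stable:
  assumes N: "N_M r \<rho> \<mu> \<delta> \<nu> \<eta> \<gamma> < 1"
  shows "loc_asym_stable_in S F (0, 0, 0)"
proof -
  define P where "P = \<nu> * \<gamma> * \<mu>"
  define Q where "Q = r * \<rho> * (\<eta> + \<delta>)"
  define C where "C = r * \<rho> * \<nu> * \<gamma>"
  define \<beta> where "\<beta> = (1 - r) * \<rho> + \<eta>"
  have P: "0 < P" and Q: "0 < Q" using r pos by (simp_all add: P_def Q_def)
  have "0 < P * Q - C\<^sup>2"
    using subthreshold_discriminant[OF N] by (simp add: P_def Q_def C_def)
  then have "0 < (P * Q - C\<^sup>2) / (2 * Q)" "0 < (P * Q - C\<^sup>2) / (2 * P)" using P Q by simp_all
  then obtain \<kappa> where \<kappa>: "0 < \<kappa>"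
    and coupled: "\<And>X Y Z Q'. (P * Q - C\<^sup>2) / (2 * Q) * X\<^sup>2 + (P * Q - C\<^sup>2) / (2 * P) * Y\<^sup>2 \<le> Q'
      \<Longrightarrow> X \<noteq> 0 \<or> Y \<noteq> 0 \<or> Z \<noteq> 0 \<Longrightarrow> 0 < Q' + \<kappa> * \<delta> * Z\<^sup>2 + \<kappa> * Z * (\<nu> * \<gamma> * X + - \<beta> * Y)"
    by (rule quadratic_small_coupling_pos[where \<delta> = \<delta> and u = "\<nu> * \<gamma>" and v = "- \<beta>"])
      (use pos in auto)
  define B :: "real \<times> real \<times> real \<Rightarrow> _"
    where "B = diagonal_form (\<nu> * \<gamma>) (r * \<rho>) \<kappa> (1, 0, 0) (0, 0, 1) (0, 1, 0)"
  obtain L where L: "L-lipschitz_on (cball (0, 0, 0) 1) F" by (rule F_lipschitz_on_cball)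
  show ?thesis
  proof (rule quadratic_lyapunov_loc_asym_stable[where B = B, OF F_origin F_has_derivative _ _ _ _ _ L])
    show "bounded_bilinear B"
      unfolding B_def by (rule bounded_bilinear_diagonal_form)
    show "B h k = B k h" for h k
      unfolding B_def by (rule diagonal_form_sym)
    show "0 < B h h" if "h \<noteq> 0" for h
    proof -
      obtain m a u where h: "h = (m, a, u)" by (cases h)
      show ?thesis unfolding B_def
        by (rule diagonal_form_pos[OF _ _ \<kappa> that]) (use r pos in \<open>auto simp: h zero_prod_def\<close>)
    qed
    show "B h (jacobian (0, 0, 0) h) < 0" if "h \<noteq> 0" for h
    proof -
      obtain m a u where h: "h = (m, a, u)" by (cases h)
      have "B h (jacobian (0, 0, 0) h)
          = - ((P * m\<^sup>2 - 2 * C * m * u + Q * u\<^sup>2) + \<kappa> * \<delta> * a\<^sup>2 + \<kappa> * a * (\<nu> * \<gamma> * m + - \<beta> * u))"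
        by (simp add: B_def h diagonal_form_def jacobian_origin P_def Q_def C_def \<beta>_def
            power2_eq_square algebra_simps)
      moreover have "0 < (P * m\<^sup>2 - 2 * C * m * u + Q * u\<^sup>2) + \<kappa> * \<delta> * a\<^sup>2 + \<kappa> * a * (\<nu> * \<gamma> * m + - \<beta> * u)"
        using that by (intro coupled binary_quadratic_lower_bound[OF P Q]) (auto simp: h zero_prod_def)
      ultimately show ?thesis by linarith
    qed
  qed simp
qed

lemma jacobian_origin_left_eigenvector:
  assumes "\<xi>\<^sup>2 + (\<mu> + \<eta> + \<delta>) * \<xi> + \<mu> * (\<eta> + \<delta>) - r * \<rho> * \<nu> * \<gamma> = 0"
  shows "inner (\<nu> * \<gamma>, 0, \<xi> + \<mu>) (jacobian (0, 0, 0) h) = \<xi> * inner (\<nu> * \<gamma>, 0, \<xi> + \<mu>) h"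
proof -
  obtain m a u where h: "h = (m, a, u)" by (cases h)
  have "inner (\<nu> * \<gamma>, 0, \<xi> + \<mu>) (jacobian (0, 0, 0) h) - \<xi> * inner (\<nu> * \<gamma>, 0, \<xi> + \<mu>) h
      = - (\<xi>\<^sup>2 + (\<mu> + \<eta> + \<delta>) * \<xi> + \<mu> * (\<eta> + \<delta>) - r * \<rho> * \<nu> * \<gamma>) * u"
    by (simp add: h jacobian_origin power2_eq_square algebra_simps)
  then show ?thesis using assms by simp
qed

lemma origin_saddle_eigenvalues:
  assumes N: "1 < N_M r \<rho> \<mu> \<delta> \<nu> \<eta> \<gamma>"
  obtains \<xi>\<^sub>u \<xi>\<^sub>s where "0 < \<xi>\<^sub>u" "\<xi>\<^sub>s + \<mu> \<le> 0" "\<xi>\<^sub>s < \<xi>\<^sub>u"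
    "\<And>\<xi>. \<xi> \<in> {\<xi>\<^sub>u, \<xi>\<^sub>s} \<Longrightarrow> \<xi>\<^sup>2 + (\<mu> + \<eta> + \<delta>) * \<xi> + \<mu> * (\<eta> + \<delta>) - r * \<rho> * \<nu> * \<gamma> = 0"
proof
  define T where "T = \<mu> + \<eta> + \<delta>"
  define C where "C = r * \<rho> * \<nu> * \<gamma>"
  define s where "s = sqrt ((\<mu> - \<eta> - \<delta>)\<^sup>2 + 4 * C)"
  have C: "\<mu> * (\<eta> + \<delta>) < C"
    using N pos unfolding N_M_def C_def by (simp add: less_divide_eq mult_ac add_pos_pos add.commute)
  have C0: "0 < C" using r pos by (simp add: C_def)
  have s2: "s\<^sup>2 = (\<mu> - \<eta> - \<delta>)\<^sup>2 + 4 * C" unfolding s_def using C0 by simp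
  have s_ge: "\<bar>\<mu> - \<eta> - \<delta>\<bar> \<le> s"
    unfolding s_def using C0 real_sqrt_le_mono[of "(\<mu> - \<eta> - \<delta>)\<^sup>2"] by simp
  have "T\<^sup>2 < s\<^sup>2" using C unfolding s2 T_def by (simp add: power2_eq_square algebra_simps)
  then have "T < s" using s_ge by (simp add: power_less_imp_less_base)
  then show "0 < (- T + s) / 2" by simp
  show "(- T - s) / 2 + \<mu> \<le> 0"
    using s_ge abs_ge_self[of "\<mu> - \<eta> - \<delta>"] unfolding T_def by (simp add: field_simps)
  show "(- T - s) / 2 < (- T + s) / 2" using \<open>T < s\<close> pos by (simp add: T_def)
  fix \<xi> assume "\<xi> \<in> {(- T + s) / 2, (- T - s) / 2}"
  then have "\<xi>\<^sup>2 + T * \<xi> = (s\<^sup>2 - T\<^sup>2) / 4"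
    by (elim insertE emptyE; hypsubst; simp add: power2_eq_square field_simps)
  also have "\<dots> = C - \<mu> * (\<eta> + \<delta>)"
    unfolding s2 T_def by (simp add: power2_eq_square field_simps)
  finally show "\<xi>\<^sup>2 + (\<mu> + \<eta> + \<delta>) * \<xi> + \<mu> * (\<eta> + \<delta>) - r * \<rho> * \<nu> * \<gamma> = 0"
    by (simp add: T_def C_def)
qed

lemma jacobian_origin_A_row:
  assumes "\<xi>\<^sub>s \<noteq> \<xi>\<^sub>u"
  defines "w \<equiv> (\<xi>\<^sub>u + \<mu> + (1 - r) * \<rho> + \<eta>) / (\<xi>\<^sub>u - \<xi>\<^sub>s)"
  shows "inner (0, 1, 0) (jacobian (0, 0, 0) h) = - \<delta> * inner (0, 1, 0) h
           - ((1 - w) * inner (\<nu> * \<gamma>, 0, \<xi>\<^sub>u + \<mu>) h + w * inner (\<nu> * \<gamma>, 0, \<xi>\<^sub>s + \<mu>) h)"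
proof -
  obtain m a u where h: "h = (m, a, u)" by (cases h)
  have "(1 - w) * inner (\<nu> * \<gamma>, 0, \<xi>\<^sub>u + \<mu>) h + w * inner (\<nu> * \<gamma>, 0, \<xi>\<^sub>s + \<mu>) h
      = \<nu> * \<gamma> * m + (\<xi>\<^sub>u + \<mu>) * u - w * ((\<xi>\<^sub>u - \<xi>\<^sub>s) * u)"
    by (simp add: h algebra_simps)
  also have "w * ((\<xi>\<^sub>u - \<xi>\<^sub>s) * u) = (\<xi>\<^sub>u + \<mu> + (1 - r) * \<rho> + \<eta>) * u"
    using assms(1) by (simp add: w_def)
  also have "\<nu> * \<gamma> * m + (\<xi>\<^sub>u + \<mu>) * u - (\<xi>\<^sub>u + \<mu> + (1 - r) * \<rho> + \<eta>) * u
      = \<nu> * \<gamma> * m - ((1 - r) * \<rho> + \<eta>) * u"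
    by (simp add: algebra_simps)
  finally show ?thesis by (simp add: h jacobian_origin algebra_simps)
qed

lemma unstable_direction_in_orthant:
  assumes "\<xi>\<^sub>s + \<mu> \<le> 0" "\<xi>\<^sub>s < \<xi>\<^sub>u" "0 < d"
  obtains y where "y \<in> orthant" "norm y < d" "inner (\<nu> * \<gamma>, 0, \<xi>\<^sub>s + \<mu>) y = 0" "inner (0, 1, 0) y = 0"
    "0 < inner (\<nu> * \<gamma>, 0, \<xi>\<^sub>u + \<mu>) y"
proof
  define v :: "real \<times> real \<times> real" where "v = (- (\<xi>\<^sub>s + \<mu>), 0, \<nu> * \<gamma>)"
  have "0 < norm v" using pos by (simp add: v_def zero_prod_def)
  define t where "t = d / (2 * norm v)"
  have t: "0 < t" "t * norm v < d" using assms(3) \<open>0 < norm v\<close> by (simp_all add: t_def)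
  show "t *\<^sub>R v \<in> orthant" using t assms pos by (simp add: v_def orthant_def)
  show "norm (t *\<^sub>R v) < d" using t by simp
  show "inner (\<nu> * \<gamma>, 0, \<xi>\<^sub>s + \<mu>) (t *\<^sub>R v) = 0" "inner (0, 1, 0) (t *\<^sub>R v) = 0"
    by (simp_all add: v_def algebra_simps)
  have "inner (\<nu> * \<gamma>, 0, \<xi>\<^sub>u + \<mu>) (t *\<^sub>R v) = t * \<nu> * \<gamma> * (\<xi>\<^sub>u - \<xi>\<^sub>s)"
    by (simp add: v_def algebra_simps)
  then show "0 < inner (\<nu> * \<gamma>, 0, \<xi>\<^sub>u + \<mu>) (t *\<^sub>R v)" using t assms pos by simp
qed

theorem origin_not_stable:
  assumes N: "1 < N_M r \<rho> \<mu> \<delta> \<nu> \<eta> \<gamma>"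
  shows "\<not> stable_in orthant F (0, 0, 0)"
proof -
  obtain \<xi>\<^sub>u \<xi>\<^sub>s where \<xi>: "0 < \<xi>\<^sub>u" "\<xi>\<^sub>s + \<mu> \<le> 0" "\<xi>\<^sub>s < \<xi>\<^sub>u"
    and root: "\<And>\<xi>. \<xi> \<in> {\<xi>\<^sub>u, \<xi>\<^sub>s} \<Longrightarrow> \<xi>\<^sup>2 + (\<mu> + \<eta> + \<delta>) * \<xi> + \<mu> * (\<eta> + \<delta>) - r * \<rho> * \<nu> * \<gamma> = 0"
    using origin_saddle_eigenvalues[OF N] by blast
  define cu cs ca :: "real \<times> real \<times> real"
    where "cu = (\<nu> * \<gamma>, 0, \<xi>\<^sub>u + \<mu>)" and "cs = (\<nu> * \<gamma>, 0, \<xi>\<^sub>s + \<mu>)" and "ca = (0, 1, 0)"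
  define w where "w = (\<xi>\<^sub>u + \<mu> + (1 - r) * \<rho> + \<eta>) / (\<xi>\<^sub>u - \<xi>\<^sub>s)"
  let ?J = "jacobian (0, 0, 0)"
  have Ju: "inner cu (?J h) = \<xi>\<^sub>u * inner cu h" and Js: "inner cs (?J h) = \<xi>\<^sub>s * inner cs h"
    and Ja: "inner ca (?J h) = - \<delta> * inner ca h - ((1 - w) * inner cu h + w * inner cs h)" for h
    using jacobian_origin_A_row[of \<xi>\<^sub>s \<xi>\<^sub>u] \<xi>(3) unfolding cu_def cs_def ca_def w_def
    by (simp_all add: jacobian_origin_left_eigenvector root)
  obtain \<kappa> where \<kappa>: "0 < \<kappa>"
    and coupled: "\<And>X Y Z Q. \<xi>\<^sub>u * X\<^sup>2 + - \<xi>\<^sub>s * Y\<^sup>2 \<le> Q \<Longrightarrow> X \<noteq> 0 \<or> Y \<noteq> 0 \<or> Z \<noteq> 0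
      \<Longrightarrow> 0 < Q + \<kappa> * \<delta> * Z\<^sup>2 + \<kappa> * Z * ((1 - w) * X + w * Y)"
    by (rule quadratic_small_coupling_pos[where a = "\<xi>\<^sub>u" and b = "- \<xi>\<^sub>s" and \<delta> = \<delta>
          and u = "1 - w" and v = w])
      (use \<xi> pos in auto)
  define B where "B = diagonal_form 1 (- 1) (- \<kappa>) cu cs ca"
  obtain L where L: "L-lipschitz_on (cball (0, 0, 0) 1) F" by (rule F_lipschitz_on_cball)
  show ?thesis
  proof (rule quadratic_chetaev_not_stable[where B = B, OF F_origin F_has_derivative _ _ _ _ L])
    show "bounded_bilinear B"
      unfolding B_def by (rule bounded_bilinear_diagonal_form)
    show "B h k = B k h" for h k
      unfolding B_def by (rule diagonal_form_sym)
    show "0 < B h (?J h)" if "h \<noteq> 0" for h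
    proof -
      have "B h (?J h) = \<xi>\<^sub>u * (inner cu h)\<^sup>2 + - \<xi>\<^sub>s * (inner cs h)\<^sup>2 + \<kappa> * \<delta> * (inner ca h)\<^sup>2
          + \<kappa> * inner ca h * ((1 - w) * inner cu h + w * inner cs h)"
        by (simp add: B_def diagonal_form_def Ju Js Ja power2_eq_square algebra_simps)
      moreover have "inner cu h \<noteq> 0 \<or> inner cs h \<noteq> 0 \<or> inner ca h \<noteq> 0"
      proof (rule ccontr)
        obtain m a u where h: "h = (m, a, u)" by (cases h)
        assume "\<not> ?thesis"
        then have zero: "inner cu h = 0" "inner cs h = 0" "inner ca h = 0" by auto
        have "(\<xi>\<^sub>u - \<xi>\<^sub>s) * u = inner cu h - inner cs h"
          by (simp add: h cu_def cs_def algebra_simps)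
        then have "u = 0" using zero \<xi>(3) by simp
        then show False using zero that pos by (simp add: h cu_def ca_def zero_prod_def)
      qed
      ultimately show ?thesis by (simp add: coupled)
    qed
    show "\<exists>y\<in>orthant. norm (y - (0, 0, 0)) < d \<and> 0 < B (y - (0, 0, 0)) (y - (0, 0, 0))"
      if d: "0 < d" for d
    proof -
      obtain y where "y \<in> orthant" "norm y < d" "inner cs y = 0" "inner ca y = 0" "0 < inner cu y"
        using unstable_direction_in_orthant[OF \<xi>(2,3) d] unfolding cu_def cs_def ca_def by blast
      then show ?thesis
        by (intro bexI[of _ y]) (auto simp: B_def diagonal_form_def zero_prod_def[symmetric])
    qed
  qed simp
qed

lemma E2_equilibrium:
  assumes N: "1 < N_M r \<rho> \<mu> \<delta> \<nu> \<eta> \<gamma>" and \<theta>: "1 < theta_M r \<mu> \<delta> \<nu> \<eta> \<gamma>"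
  obtains M A U where "E2 r \<rho> \<sigma> \<mu> \<delta> \<nu> \<eta> \<gamma> = (M, A, U)" "0 < M" "0 \<le> A" "0 < U"
    "exp (- \<sigma> * (M + A + U)) = 1 / N_M r \<rho> \<mu> \<delta> \<nu> \<eta> \<gamma>" "F (M, A, U) = 0"
proof -
  define N \<theta> where "N = N_M r \<rho> \<mu> \<delta> \<nu> \<eta> \<gamma>" and "\<theta> = theta_M r \<mu> \<delta> \<nu> \<eta> \<gamma>"
  define D where "D = \<gamma> * \<nu> * \<theta> + \<eta> + \<delta>"
  define M A U where "M = (\<delta> + \<eta>) / D * (ln N / \<sigma>)"
    and "A = \<gamma> * \<nu> * (\<theta> - 1) / D * (ln N / \<sigma>)" and "U = \<gamma> * \<nu> / D * (ln N / \<sigma>)"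
  have E2: "E2 r \<rho> \<sigma> \<mu> \<delta> \<nu> \<eta> \<gamma> = (M, A, U)"
    by (simp add: E2_def Let_def N_def \<theta>_def D_def M_def A_def U_def)
  have D: "0 < D" and \<theta>1: "1 < \<theta>"
    using N \<theta> pos by (simp_all add: N_def \<theta>_def D_def add_pos_pos)
  have "M + A + U = ((\<delta> + \<eta>) + \<gamma> * \<nu> * (\<theta> - 1) + \<gamma> * \<nu>) / D * (ln N / \<sigma>)"
    by (simp add: M_def A_def U_def add_divide_distrib distrib_right)
  also have "(\<delta> + \<eta>) + \<gamma> * \<nu> * (\<theta> - 1) + \<gamma> * \<nu> = D" by (simp add: D_def algebra_simps)
  finally have "- \<sigma> * (M + A + U) = - ln N" using D pos by simp
  then have E: "exp (- \<sigma> * (M + A + U)) = 1 / N" using N by (simp add: N_def exp_minus inverse_eq_divide)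
  have aN: "r * \<rho> / N * (\<nu> * \<gamma>) = \<mu> * (\<eta> + \<delta>)" and bN: "(1 - r) * \<rho> / N = \<delta> * \<theta>"
    using r pos by (simp_all add: N_def N_M_def \<theta>_def theta_M_def field_simps)
  have "r * \<rho> * U * (1 / N) = r * \<rho> / N * (\<nu> * \<gamma>) / D * (ln N / \<sigma>)"
    by (simp add: U_def mult_ac)
  also have "\<dots> = \<mu> * M" unfolding aN by (simp add: M_def add.commute)
  moreover have "(1 - r) * \<rho> * U * (1 / N) - \<nu> * \<gamma> * M + \<eta> * U - \<delta> * A = 0"
  proof -
    have "(1 - r) * \<rho> * U * (1 / N) = \<delta> * \<theta> * U" by (simp flip: bN)
    moreover have "\<delta> * \<theta> * U - \<nu> * \<gamma> * M + \<eta> * U - \<delta> * A = 0"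
      using D pos by (simp add: U_def M_def A_def field_simps)
    ultimately show ?thesis by linarith
  qed
  moreover have "\<nu> * \<gamma> * M - \<eta> * U - \<delta> * U = 0"
    using D pos by (simp add: U_def M_def field_simps)
  ultimately have "F (M, A, U) = 0" using E by (simp add: Phi2_def zero_prod_def)
  moreover have "0 < M" "0 \<le> A" "0 < U"
    using N D \<theta>1 pos unfolding M_def A_def U_def N_def
    by (auto intro!: mult_pos_pos mult_nonneg_nonneg divide_pos_pos divide_nonneg_pos)
  ultimately show ?thesis using that E2 E by (simp add: N_def)
qed

lemma E2_jacobian_minors:
  assumes a: "0 < a" and b: "0 < b" and u: "0 < u" and a\<nu>\<gamma>: "a / \<mu> * (\<nu> * \<gamma>) = \<eta> + \<delta>"
  defines "m \<equiv> \<mu> - \<delta> + (a + b) * \<nu> * \<gamma> / \<mu>"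
  shows "m * (a / \<mu>) < (a + b) / \<mu> * (\<mu> + \<eta> + \<delta>)"
    and "m * (a * u) < ((a + b) * u + \<delta>) * (\<mu> + \<eta> + \<delta>)"
proof -
  have "m * (a / \<mu>) = (\<mu> - \<delta>) * a / \<mu> + (a + b) * (a / \<mu> * (\<nu> * \<gamma>)) / \<mu>"
    using pos by (simp add: m_def field_simps)
  also have "\<dots> = (\<mu> - \<delta>) * a / \<mu> + (a + b) * (\<eta> + \<delta>) / \<mu>" by (simp only: a\<nu>\<gamma>)
  finally have "(a + b) / \<mu> * (\<mu> + \<eta> + \<delta>) - m * (a / \<mu>) = b + a * \<delta> / \<mu>"
    using pos by (simp add: field_simps)
  moreover have "0 < b + a * \<delta> / \<mu>" using a b pos by (simp add: add_pos_pos)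
  ultimately show "m * (a / \<mu>) < (a + b) / \<mu> * (\<mu> + \<eta> + \<delta>)" by linarith
  have "m * (a * u) = (\<mu> - \<delta>) * a * u + (a + b) * (a / \<mu> * (\<nu> * \<gamma>)) * u"
    using pos by (simp add: m_def field_simps)
  also have "\<dots> = (\<mu> - \<delta>) * a * u + (a + b) * (\<eta> + \<delta>) * u" by (simp only: a\<nu>\<gamma>)
  finally have "((a + b) * u + \<delta>) * (\<mu> + \<eta> + \<delta>) - m * (a * u)
      = u * (b * \<mu> + a * \<delta>) + \<delta> * (\<mu> + \<eta> + \<delta>)"
    by (simp add: algebra_simps)
  moreover have "0 < u * (b * \<mu> + a * \<delta>) + \<delta> * (\<mu> + \<eta> + \<delta>)"
    using a b u pos by (simp add: add_pos_pos)
  ultimately show "m * (a * u) < ((a + b) * u + \<delta>) * (\<mu> + \<eta> + \<delta>)" by linarith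
qed

text \<open>\<open>S = M + A + U\<close> carries the whole nonlinearity, and \<open>Z = \<nu>\<gamma>M + \<mu>U\<close> loses its
  \<open>U\<close>-term because \<open>r\<rho>\<nu>\<gamma> = \<mu>(\<eta> + \<delta>)\<N>\<^sub>M\<close> and \<open>exp (- \<sigma> S) = 1 / \<N>\<^sub>M\<close> at \<open>E\<^sub>2\<^sup>*\<close>.\<close>
lemma jacobian_E2_coordinates:
  assumes N: "1 < N_M r \<rho> \<mu> \<delta> \<nu> \<eta> \<gamma>" and \<delta>\<mu>: "\<delta> \<le> \<mu>"
    and E: "exp (- \<sigma> * (M + A + U)) = 1 / N_M r \<rho> \<mu> \<delta> \<nu> \<eta> \<gamma>" and U: "0 < U"
  obtains k p q m g f h' where "0 < k" "0 < p" "0 < q" "0 < m" "0 < g" "0 < f"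
    "m * g < p * f" "m * h' < q * f"
    "\<And>h. inner (\<nu> * \<gamma>, 0, \<mu>) (jacobian (M, A, U) h) = - k * inner (1, 1, 1) h"
    "\<And>h. inner (1, 1, 1) (jacobian (M, A, U) h)
       = p * inner (\<nu> * \<gamma>, 0, \<mu>) h - q * inner (1, 1, 1) h - m * inner (1, 0, 0) h"
    "\<And>h. inner (1, 0, 0) (jacobian (M, A, U) h)
       = g * inner (\<nu> * \<gamma>, 0, \<mu>) h - h' * inner (1, 1, 1) h - f * inner (1, 0, 0) h"
proof -
  define N where "N = N_M r \<rho> \<mu> \<delta> \<nu> \<eta> \<gamma>"
  define a b c u where "a = r * \<rho> / N" and "b = (1 - r) * \<rho> / N" and "c = \<rho> / N"
    and "u = \<sigma> * U"
  have N0: "0 < N" using N by (simp add: N_def)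
  have a: "0 < a" and b: "0 < b" and c: "c = a + b" and u: "0 < u"
    using r pos N0 U by (simp_all add: a_def b_def c_def u_def field_simps)
  have a\<nu>\<gamma>: "a / \<mu> * (\<nu> * \<gamma>) = \<eta> + \<delta>"
    using r pos N0 by (simp add: a_def N_def N_M_def field_simps)
  have J: "jacobian (M, A, U) (m0, a0, u0) =
      (a * u0 - a * u * (m0 + a0 + u0) - \<mu> * m0,
       b * u0 - b * u * (m0 + a0 + u0) - \<nu> * \<gamma> * m0 + \<eta> * u0 - \<delta> * a0,
       \<nu> * \<gamma> * m0 - \<eta> * u0 - \<delta> * u0)" for m0 a0 u0
    unfolding jacobian_def prod.case Let_def E N_def[symmetric]
    by (simp add: a_def b_def u_def algebra_simps diff_divide_distrib add_divide_distrib)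
  define k p q m g h' f where "k = \<nu> * \<gamma> * a * u" and "p = c / \<mu>" and "q = c * u + \<delta>"
    and "m = \<mu> - \<delta> + c * \<nu> * \<gamma> / \<mu>" and "g = a / \<mu>" and "h' = a * u" and "f = \<mu> + \<eta> + \<delta>"
  show ?thesis
  proof (rule that[of k p q m g f h'])
    show "0 < k" "0 < p" "0 < q" "0 < m" "0 < g" "0 < f"
      using a b c u pos \<delta>\<mu> by (simp_all add: k_def p_def q_def m_def g_def f_def add_pos_pos
          add_nonneg_pos)
    show "m * g < p * f" "m * h' < q * f"
      using E2_jacobian_minors[OF a b u a\<nu>\<gamma>] by (simp_all add: m_def g_def p_def f_def h'_def q_def c)
    fix h :: "real \<times> real \<times> real"
    obtain m0 a0 u0 where h: "h = (m0, a0, u0)" by (cases h)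
    have "a * (\<nu> * \<gamma>) = \<mu> * (\<eta> + \<delta>)" using a\<nu>\<gamma> pos by (simp add: field_simps)
    moreover have "inner (\<nu> * \<gamma>, 0, \<mu>) (jacobian (M, A, U) h)
        = (a * (\<nu> * \<gamma>) - \<mu> * (\<eta> + \<delta>)) * u0 - k * inner (1, 1, 1) h"
      by (simp add: h J k_def algebra_simps)
    ultimately show "inner (\<nu> * \<gamma>, 0, \<mu>) (jacobian (M, A, U) h) = - k * inner (1, 1, 1) h"
      by simp
    show "inner (1, 1, 1) (jacobian (M, A, U) h)
       = p * inner (\<nu> * \<gamma>, 0, \<mu>) h - q * inner (1, 1, 1) h - m * inner (1, 0, 0) h"
      using pos by (simp add: h J p_def q_def m_def c field_simps)
    show "inner (1, 0, 0) (jacobian (M, A, U) h)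
       = g * inner (\<nu> * \<gamma>, 0, \<mu>) h - h' * inner (1, 1, 1) h - f * inner (1, 0, 0) h"
    proof -
      have "g * inner (\<nu> * \<gamma>, 0, \<mu>) h = a / \<mu> * (\<nu> * \<gamma>) * m0 + a * u0"
        using pos by (simp add: h g_def algebra_simps)
      also have "\<dots> = (\<eta> + \<delta>) * m0 + a * u0" by (simp only: a\<nu>\<gamma>)
      finally show ?thesis by (simp add: h J h'_def f_def algebra_simps)
    qed
  qed
qed

theorem E2_loc_asym_stable:
  assumes N: "1 < N_M r \<rho> \<mu> \<delta> \<nu> \<eta> \<gamma>" and \<theta>: "1 < theta_M r \<mu> \<delta> \<nu> \<eta> \<gamma>" and \<delta>\<mu>: "\<delta> \<le> \<mu>"
  shows "E2 r \<rho> \<sigma> \<mu> \<delta> \<nu> \<eta> \<gamma> \<in> orthant \<and> loc_asym_stable_in S F (E2 r \<rho> \<sigma> \<mu> \<delta> \<nu> \<eta> \<gamma>)"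
proof -
  obtain M A U where E2: "E2 r \<rho> \<sigma> \<mu> \<delta> \<nu> \<eta> \<gamma> = (M, A, U)" and MAU: "0 < M" "0 \<le> A" "0 < U"
    and E: "exp (- \<sigma> * (M + A + U)) = 1 / N_M r \<rho> \<mu> \<delta> \<nu> \<eta> \<gamma>" and eq: "F (M, A, U) = 0"
    by (rule E2_equilibrium[OF N \<theta>])
  obtain k p q m g f h' where coeffs: "0 < k" "0 < p" "0 < q" "0 < m" "0 < g" "0 < f"
    "m * g < p * f" "m * h' < q * f"
    and J: "\<And>h. inner (\<nu> * \<gamma>, 0, \<mu>) (jacobian (M, A, U) h) = - k * inner (1, 1, 1) h"
      "\<And>h. inner (1, 1, 1) (jacobian (M, A, U) h)
         = p * inner (\<nu> * \<gamma>, 0, \<mu>) h - q * inner (1, 1, 1) h - m * inner (1, 0, 0) h"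
      "\<And>h. inner (1, 0, 0) (jacobian (M, A, U) h)
         = g * inner (\<nu> * \<gamma>, 0, \<mu>) h - h' * inner (1, 1, 1) h - f * inner (1, 0, 0) h"
    using jacobian_E2_coordinates[OF N \<delta>\<mu> E MAU(3)] by blast
  have inj: "h = 0" if "inner (\<nu> * \<gamma>, 0, \<mu>) h = 0" "inner (1, 1, 1) h = 0" "inner (1, 0, 0) h = 0"
    for h :: "real \<times> real \<times> real"
  proof -
    obtain m0 a0 u0 where h: "h = (m0, a0, u0)" by (cases h)
    have "m0 = 0" using that(3) by (simp add: h)
    moreover have "u0 = 0" using that(1) \<open>m0 = 0\<close> pos by (simp add: h)
    moreover have "a0 = 0" using that(2) \<open>m0 = 0\<close> \<open>u0 = 0\<close> by (simp add: h)
    ultimately show ?thesis by (simp add: h zero_prod_def)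
  qed
  obtain B :: "real \<times> real \<times> real \<Rightarrow> _ \<Rightarrow> real" where B: "bounded_bilinear B" "\<And>h k. B h k = B k h"
    "\<And>h. h \<noteq> 0 \<Longrightarrow> 0 < B h h" "\<And>h. h \<noteq> 0 \<Longrightarrow> B h (jacobian (M, A, U) h) < 0"
    using hurwitz_coordinates_lyapunov_form[OF J coeffs inj] by blast
  obtain L where L: "L-lipschitz_on (cball (M, A, U) 1) F" by (rule F_lipschitz_on_cball)
  have "loc_asym_stable_in S F (M, A, U)"
    by (rule quadratic_lyapunov_loc_asym_stable[where B = B, OF eq F_has_derivative B(1) _ _ _ _ L])
      (use B in auto)
  moreover have "(M, A, U) \<in> orthant" using MAU by (simp add: orthant_def)
  ultimately show ?thesis by (simp add: E2)
qed

lemma A_axis_solution: "is_sol F (\<lambda>t. (0, exp (- \<delta> * t), 0)) {0..}"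
  unfolding is_sol_def
proof (intro conjI ballI)
  fix t :: real
  have "((\<lambda>t. exp (- \<delta> * t)) has_vector_derivative - \<delta> * exp (- \<delta> * t)) (at t within {0..})"
    by (auto intro!: derivative_eq_intros simp: has_real_derivative_iff_has_vector_derivative[symmetric])
  then have "((\<lambda>t. (0::real, exp (- \<delta> * t), 0::real)) has_vector_derivative (0, - \<delta> * exp (- \<delta> * t), 0))
      (at t within {0..})"
    by (intro has_vector_derivative_Pair) auto
  then show "((\<lambda>t. (0, exp (- \<delta> * t), 0)) has_vector_derivative F (0, exp (- \<delta> * t), 0))
      (at t within {0..})"
    by (simp add: Phi2_def)
qed (auto simp: is_interval_ci)

end

theorem proposition3:
  fixes r \<rho> \<sigma> \<mu> \<delta> \<nu> \<eta> \<gamma> :: real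
  assumes "0 < r" "r < 1" "\<rho> > 0" "\<sigma> > 0" "\<mu> > 0" "\<delta> > 0" "\<nu> > 0" "\<eta> > 0"
    and "\<gamma> \<ge> 1" "\<mu> \<ge> \<delta>"
  defines "F \<equiv> Phi2 r \<rho> \<sigma> \<mu> \<delta> \<nu> \<eta> \<gamma>"
  shows "(N_M r \<rho> \<mu> \<delta> \<nu> \<eta> \<gamma> < 1 \<longrightarrow> loc_asym_stable_in orthant F (0, 0, 0))
    \<and> (N_M r \<rho> \<mu> \<delta> \<nu> \<eta> \<gamma> > 1 \<and> theta_M r \<mu> \<delta> \<nu> \<eta> \<gamma> > 1 \<longrightarrow>
         E2 r \<rho> \<sigma> \<mu> \<delta> \<nu> \<eta> \<gamma> \<in> orthant
       \<and> loc_asym_stable_in orthant F (E2 r \<rho> \<sigma> \<mu> \<delta> \<nu> \<eta> \<gamma>)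
       \<and> \<not> stable_in orthant F (0, 0, 0)
       \<and> (\<exists>x. is_sol F x {0..} \<and> x 0 \<in> orthant \<and> x 0 \<noteq> (0, 0, 0)
              \<and> (x \<longlongrightarrow> (0, 0, 0)) at_top))"
proof -
  interpret Phi2_system r \<rho> \<sigma> \<mu> \<delta> \<nu> \<eta> \<gamma>
    using assms by unfold_locales auto
  let ?x = "\<lambda>t. (0, exp (- \<delta> * t), 0)"
  have "((\<lambda>t. exp (- \<delta> * t)) \<longlongrightarrow> 0) at_top"
    using assms(6) by (rule tendsto_exp_neg_at_top)
  then have "is_sol F ?x {0..} \<and> ?x 0 \<in> orthant \<and> ?x 0 \<noteq> (0, 0, 0) \<and> (?x \<longlongrightarrow> (0, 0, 0)) at_top"
    using A_axis_solution by (auto simp: F_def orthant_def intro!: tendsto_Pair)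
  then show ?thesis
    using origin_loc_asym_stable E2_loc_asym_stable origin_not_stable assms(10)
    unfolding F_def by blast
qed

end
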